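(* Let $U\in C^4(-1,1)$ with $U'>c_0>0$, $U(0)=0$, $U''(0)=0$ and $-C\le U''/U\le0$. Consider, for $m$ fixed and $\lambda<0$, the problem $$\Phi''(y)-\frac{U''(y)}{U(y)}\Phi(y)+\lambda\Phi(y)=-\frac{m}{U'(0)}\Phi(0)\delta(0),\qquad \Phi(\pm1)=0,$$ understood weakly: $\Phi\in H^1_0(-1,1)$ and $$\int_{-1}^1\Big(\Phi'\varphi'+\frac{U''}{U}\Phi\varphi-\lambda\Phi\varphi\Big)dy=\frac{m\,\Phi(0)\varphi(0)}{U'(0)}\quad\text{for all }\varphi\in H^1_0(-1,1).$$ Then this problem admits a nontrivial solution for fixed $m$ and $\lambda<0$ if and only if $m=\mathfrak{M}(\lambda)$ for some function $\mathfrak{M}$ of $\lambda$. Moreover $\mathfrak{M}$ is strictly decreasing: $\partial_\lambda\mathfrak{M}<0$.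
   Context: $\delta(0)$ denotes the Dirac mass at $y=0$. *)

theory Defs
  imports "HOL-Analysis.Analysis"
begin

definition Ck_on :: "nat \<Rightarrow> real set \<Rightarrow> (real \<Rightarrow> real) \<Rightarrow> bool" where
  "Ck_on k S f \<longleftrightarrow>
     (\<forall>j<k. \<forall>x\<in>S. ((deriv ^^ j) f) differentiable (at x)) \<and>
     continuous_on S ((deriv ^^ k) f)"

text \<open>H10 f f': f belongs to H^1_0(-1,1) with weak derivative f'.
  In one dimension this means f is (the continuous representative)
  f(x) = integral of f' from -1 to x, with f' square integrable on (-1,1),
  and the boundary values f(-1) = 0 (automatic) and f(1) = 0.\<close>
definition H10 :: "(real \<Rightarrow> real) \<Rightarrow> (real \<Rightarrow> real) \<Rightarrow> bool" where
  "H10 f f' \<longleftrightarrow>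
     f' \<in> borel_measurable lborel \<and>
     set_integrable lborel {-1..1} (\<lambda>x. (f' x)\<^sup>2) \<and>
     (\<forall>x\<in>{-1..1}. f x = (LBINT t=-1..x. f' t)) \<and>
     f 1 = 0"

definition weak_sol :: "(real \<Rightarrow> real) \<Rightarrow> real \<Rightarrow> real \<Rightarrow> (real \<Rightarrow> real) \<Rightarrow> (real \<Rightarrow> real) \<Rightarrow> bool" where
  "weak_sol U m lam \<Phi> \<Phi>' \<longleftrightarrow>
     H10 \<Phi> \<Phi>' \<and>
     (\<forall>\<phi> \<phi>'. H10 \<phi> \<phi>' \<longrightarrow>
        (LBINT y=-1..1. \<Phi>' y * \<phi>' y + (deriv (deriv U) y / U y) * \<Phi> y * \<phi> y
                         - lam * \<Phi> y * \<phi> y)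
        = m * \<Phi> 0 * \<phi> 0 / deriv U 0)"

definition has_nontrivial_sol :: "(real \<Rightarrow> real) \<Rightarrow> real \<Rightarrow> real \<Rightarrow> bool" where
  "has_nontrivial_sol U m lam \<longleftrightarrow>
     (\<exists>\<Phi> \<Phi>'. weak_sol U m lam \<Phi> \<Phi>' \<and> (\<exists>x\<in>{-1..1}. \<Phi> x \<noteq> 0))"

end

theory Submission
  imports Defs
begin

text \<open>
  Write \<open>V = U''/U\<close>. Since \<open>U\<close> solves \<open>U'' = V U\<close> and has the sign of \<open>y\<close>, Picone's identity
  gives \<open>\<integral> f'\<^sup>2 + V f\<^sup>2 = \<integral> (f' - U' f / U)\<^sup>2\<close> plus boundary terms \<open>U' f\<^sup>2 / U\<close>; these have
  the right sign at \<open>\<plusminus>1\<close> and vanish at 0 when \<open>f 0 = 0\<close>, by the Hardy-type bound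
  \<open>f y\<^sup>2 \<le> \<bar>y\<bar> \<integral>\<^sub>0\<^sup>y f'\<^sup>2\<close> and \<open>\<bar>U y\<bar> \<ge> c\<^sub>0 \<bar>y\<bar>\<close>. So for \<open>\<lambda> < 0\<close> the form
  \<open>\<integral> f'\<^sup>2 + V f\<^sup>2 - \<lambda> f\<^sup>2\<close> is coercive on functions vanishing at 0.

  Consequently a weak solution with \<open>\<Phi>(0) = 0\<close> vanishes, and testing two nontrivial solutions
  against each other shows that they have the same \<open>m\<close>. A solution exists: on \<open>[-1, 0]\<close> and
  \<open>[0, 1]\<close> solve \<open>\<Phi>'' = (V - \<lambda>) \<Phi>\<close> (by Picard iteration, \<open>V\<close> being only bounded and
  measurable) with \<open>\<Phi>(\<plusminus>1) = 0\<close> and \<open>\<Phi>(0) = 1\<close>, which is possible by the same coercivity,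
  and read off \<open>m\<close> from the jump of \<open>\<Phi>'\<close> at 0. Finally, testing the normalised solutions
  \<open>\<Phi>\<^sub>\<lambda>\<close> and \<open>\<Phi>\<^sub>\<mu>\<close> against each other gives
  \<open>\<M>(\<lambda>) - \<M>(\<mu>) = U'(0) (\<mu> - \<lambda>) \<integral> \<Phi>\<^sub>\<lambda> \<Phi>\<^sub>\<mu>\<close>, and testing them against their
  difference shows \<open>\<Phi>\<^sub>\<mu> \<rightarrow> \<Phi>\<^sub>\<lambda>\<close> in \<open>L\<^sup>2\<close>; hence \<open>\<M>'(\<lambda>) = - U'(0) \<integral> \<Phi>\<^sub>\<lambda>\<^sup>2 < 0\<close>.
\<close>

lemma interval_integrable_iff_set_integrable_Icc:
  fixes a b :: real
  assumes "a \<le> b"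
  shows "interval_lebesgue_integrable lborel a b f \<longleftrightarrow> set_integrable lborel {a..b} f"
proof -
  have "set_integrable lborel {a<..<b} f \<longleftrightarrow> set_integrable lborel {a..b} f"
    by (rule set_integrable_discrete_difference[where X="{a,b}"]) auto
  then show ?thesis using assms by (simp add: interval_lebesgue_integrable_def)
qed

lemma interval_integrable_iff_indicator:
  fixes a b :: real and h :: "real \<Rightarrow> real"
  assumes "a \<le> b"
  shows "interval_lebesgue_integrable lborel a b h \<longleftrightarrow> integrable lborel (\<lambda>x. indicator {a..b} x * h x)"
  using assms by (simp add: interval_integrable_iff_set_integrable_Icc set_integrable_def)

lemma interval_integral_indicator:
  fixes a b :: real and h :: "real \<Rightarrow> real"
  assumes "a \<le> b"
  shows "(LBINT x=a..b. h x) = (\<integral>x. indicator {a..b} x * h x \<partial>lborel)"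
  using assms by (simp add: interval_integral_Icc set_lebesgue_integral_def)

lemma interval_integrable_subinterval:
  fixes a b c d :: real
  assumes "a \<le> c" "c \<le> d" "d \<le> b" "interval_lebesgue_integrable lborel a b f"
  shows "interval_lebesgue_integrable lborel c d f"
  using assms unfolding interval_lebesgue_integrable_def
  by (auto intro: set_integrable_subset)

lemma interval_integrable_join:
  fixes a b c :: real
  assumes "a \<le> b" "b \<le> c"
    and "interval_lebesgue_integrable lborel a b f" "interval_lebesgue_integrable lborel b c f"
  shows "interval_lebesgue_integrable lborel a c f"
proof -
  have "set_integrable lborel ({a..b} \<union> {b..c}) f"
    using assms by (intro set_integrable_Un) (auto simp: interval_integrable_iff_set_integrable_Icc)
  moreover have "{a..b} \<union> {b..c} = {a..c}" using assms by auto
  ultimately show ?thesis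
    using assms by (simp add: interval_integrable_iff_set_integrable_Icc)
qed

lemma interval_integrable_cong_open:
  fixes a b :: real
  assumes "a \<le> b" "\<And>x. a < x \<Longrightarrow> x < b \<Longrightarrow> f x = g x"
    and "interval_lebesgue_integrable lborel a b f"
  shows "interval_lebesgue_integrable lborel a b g"
proof -
  have "set_integrable lborel {a<..<b} f = set_integrable lborel {a<..<b} g"
    by (rule set_integrable_cong) (use assms in auto)
  then show ?thesis using assms by (simp add: interval_lebesgue_integrable_def)
qed

lemma interval_integral_cong_open:
  fixes a b :: real
  assumes "a \<le> b" "\<And>x. a < x \<Longrightarrow> x < b \<Longrightarrow> f x = g x"
  shows "(LBINT x=a..b. f x) = (LBINT x=a..b. g x)"
  by (rule interval_lebesgue_integral_cong) (use assms in auto)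

lemma interval_integral_mono_open:
  fixes a b :: real and f g :: "real \<Rightarrow> real"
  assumes "a \<le> b" "interval_lebesgue_integrable lborel a b f"
    and "interval_lebesgue_integrable lborel a b g" "\<And>x. a < x \<Longrightarrow> x < b \<Longrightarrow> f x \<le> g x"
  shows "(LBINT x=a..b. f x) \<le> (LBINT x=a..b. g x)"
  using assms unfolding interval_lebesgue_integrable_def interval_lebesgue_integral_def
  by (auto intro!: set_integral_mono)

lemma interval_integral_nonneg_open:
  fixes a b :: real and f :: "real \<Rightarrow> real"
  assumes "a \<le> b" "\<And>x. a < x \<Longrightarrow> x < b \<Longrightarrow> 0 \<le> f x"
  shows "0 \<le> (LBINT x=a..b. f x)"
  using assms unfolding interval_lebesgue_integral_def set_lebesgue_integral_def
  by (auto intro!: integral_nonneg simp: indicator_def)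

lemma interval_integral_abs_le:
  fixes a b :: real and f :: "real \<Rightarrow> real"
  assumes "a \<le> b" "interval_lebesgue_integrable lborel a b f"
  shows "\<bar>LBINT x=a..b. f x\<bar> \<le> (LBINT x=a..b. \<bar>f x\<bar>)"
  using interval_integral_norm[OF assms(2)] assms by simp

lemma interval_integral_continuous_upper:
  fixes a b :: real and f :: "real \<Rightarrow> real"
  assumes "a \<le> b" "interval_lebesgue_integrable lborel a b f"
  shows "continuous_on {a..b} (\<lambda>x. LBINT t=a..x. f t)"
proof -
  have si: "set_integrable lborel {a..b} f"
    using assms interval_integrable_iff_set_integrable_Icc by blast
  have "f integrable_on {a..b}" using set_borel_integral_eq_integral(1)[OF si] .
  then have "continuous_on {a..b} (\<lambda>x. integral {a..x} f)"
    by (rule indefinite_integral_continuous_1)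
  then show ?thesis
  proof (rule continuous_on_eq)
    fix x assume x: "x \<in> {a..b}"
    have "set_integrable lborel {a..x} f" using si x by (auto intro: set_integrable_subset)
    then show "integral {a..x} f = (LBINT t=a..x. f t)" using x by (simp add: interval_integral_eq_integral)
  qed
qed

lemma interval_integrable_bounded_measurable:
  fixes h :: "real \<Rightarrow> real"
  assumes "a \<le> b" "(\<lambda>x. indicator {a..b} x * h x) \<in> borel_measurable lborel"
    and "\<And>x. x \<in> {a..b} \<Longrightarrow> \<bar>h x\<bar> \<le> B"
  shows "interval_lebesgue_integrable lborel a b h"
proof -
  have "integrable lborel (\<lambda>x. indicator {a..b} x * B)"
    by (intro integrable_mult_left integrable_real_indicator) (auto simp: emeasure_lborel_Icc_eq)
  then have "integrable lborel (\<lambda>x. indicator {a..b} x * h x)"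
    by (rule Bochner_Integration.integrable_bound)
       (use assms in \<open>auto simp: indicator_def intro: order_trans[OF _ abs_ge_self]\<close>)
  then show ?thesis using assms(1) interval_integrable_iff_indicator by blast
qed

lemma interval_integrable_mult_continuous:
  fixes f G :: "real \<Rightarrow> real"
  assumes ab: "a \<le> b" and f: "interval_lebesgue_integrable lborel a b f"
    and G: "continuous_on {a..b} G"
  shows "interval_lebesgue_integrable lborel a b (\<lambda>x. f x * G x)"
proof -
  have fi: "integrable lborel (\<lambda>x. indicator {a..b} x * f x)"
    using f ab interval_integrable_iff_indicator by blast
  obtain B where B: "\<And>x. x \<in> {a..b} \<Longrightarrow> \<bar>G x\<bar> \<le> B"
    using compact_imp_bounded[OF compact_continuous_image[OF G compact_Icc]]
    unfolding bounded_iff by fastforce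
  have "0 \<le> B" using B[of a] ab by auto
  have "(\<lambda>x. indicator {a..b} x * G x) \<in> borel_measurable lborel"
    using borel_measurable_continuous_on_indicator[OF _ G] by simp
  then have "(\<lambda>x. (indicator {a..b} x * f x) * (indicator {a..b} x * G x)) \<in> borel_measurable lborel"
    using borel_measurable_integrable[OF fi] by (rule borel_measurable_times[rotated])
  then have "(\<lambda>x. indicator {a..b} x * (f x * G x)) \<in> borel_measurable lborel"
    by (rule measurable_cong[THEN iffD1, rotated]) (simp add: indicator_def)
  then have "integrable lborel (\<lambda>x. indicator {a..b} x * (f x * G x))"
    by (rule Bochner_Integration.integrable_bound[OF integrable_mult_right[OF fi, of B]])
       (use B \<open>0 \<le> B\<close> in \<open>auto simp: indicator_def abs_mult mult_right_mono mult.commute\<close>)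
  then show ?thesis using ab interval_integrable_iff_indicator by blast
qed

lemma interval_integral_dominated_convergence:
  fixes s :: "nat \<Rightarrow> real \<Rightarrow> real" and f :: "real \<Rightarrow> real"
  assumes ab: "a \<le> b" and m: "\<And>i. (\<lambda>x. indicator {a..b} x * s i x) \<in> borel_measurable lborel"
    and lim: "\<And>x. x \<in> {a..b} \<Longrightarrow> (\<lambda>i. s i x) \<longlonglongrightarrow> f x"
    and B: "\<And>i x. x \<in> {a..b} \<Longrightarrow> \<bar>s i x\<bar> \<le> B"
  shows "interval_lebesgue_integrable lborel a b f"
    and "(\<lambda>i. LBINT x=a..b. s i x) \<longlonglongrightarrow> (LBINT x=a..b. f x)"
proof -
  have lim': "(\<lambda>i. indicator {a..b} x * s i x) \<longlonglongrightarrow> indicator {a..b} x * f x" for x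
    by (cases "x \<in> {a..b}") (auto intro: tendsto_mult_left lim)
  have fm: "(\<lambda>x. indicator {a..b} x * f x) \<in> borel_measurable lborel"
    by (rule borel_measurable_LIMSEQ_real[OF lim' m])
  have fB: "\<bar>f x\<bar> \<le> B" if "x \<in> {a..b}" for x
    using tendsto_rabs[OF lim[OF that]] by (rule LIMSEQ_le_const2) (use B that in auto)
  show "interval_lebesgue_integrable lborel a b f"
    by (rule interval_integrable_bounded_measurable[OF ab fm fB])
  have "integrable lborel (\<lambda>x. indicator {a..b} x * B)"
    by (intro integrable_mult_left integrable_real_indicator) (auto simp: emeasure_lborel_Icc_eq)
  then have "(\<lambda>i. \<integral>x. indicator {a..b} x * s i x \<partial>lborel) \<longlonglongrightarrow> (\<integral>x. indicator {a..b} x * f x \<partial>lborel)"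
    by (rule integral_dominated_convergence[OF fm m])
       (use lim' B in \<open>auto simp: indicator_def\<close>)
  then show "(\<lambda>i. LBINT x=a..b. s i x) \<longlonglongrightarrow> (LBINT x=a..b. f x)"
    using ab by (simp add: interval_integral_indicator)
qed

lemma discriminant_nonpos:
  fixes A B C :: real
  assumes "\<And>t. 0 \<le> A - 2 * t * B + t\<^sup>2 * C" "0 \<le> C"
  shows "B\<^sup>2 \<le> A * C"
proof (cases "C = 0")
  case True
  have "B = 0"
  proof (rule ccontr)
    assume "B \<noteq> 0"
    have "0 \<le> A - 2 * ((A + 1) / (2 * B)) * B" using assms(1)[of "(A + 1) / (2 * B)"] True by simp
    also have "\<dots> = -1" using \<open>B \<noteq> 0\<close> by (simp add: field_simps)
    finally show False by simp
  qed
  then show ?thesis using True by simp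
next
  case False
  then have "0 < C" using assms(2) by simp
  have "0 \<le> A - 2 * (B / C) * B + (B / C)\<^sup>2 * C" by (rule assms(1))
  also have "\<dots> = A - B\<^sup>2 / C" using \<open>0 < C\<close> by (simp add: field_simps power2_eq_square)
  finally show ?thesis using \<open>0 < C\<close> by (simp add: field_simps)
qed

lemma interval_integral_Cauchy_Schwarz:
  fixes f g :: "real \<Rightarrow> real" and a b :: real
  assumes ab: "a \<le> b" and f2: "interval_lebesgue_integrable lborel a b (\<lambda>x. f x ^ 2)"
    and g2: "interval_lebesgue_integrable lborel a b (\<lambda>x. g x ^ 2)"
    and fg: "interval_lebesgue_integrable lborel a b (\<lambda>x. f x * g x)"
  shows "(LBINT x=a..b. f x * g x)\<^sup>2 \<le> (LBINT x=a..b. f x ^ 2) * (LBINT x=a..b. g x ^ 2)"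
proof (rule discriminant_nonpos)
  show "0 \<le> (LBINT x=a..b. g x ^ 2)" by (rule interval_integral_nonneg_open[OF ab]) simp
  fix t :: real
  have i1: "interval_lebesgue_integrable lborel a b (\<lambda>x. f x ^ 2 - 2 * t * (f x * g x))"
    using f2 fg by (intro interval_lebesgue_integral_diff(1) interval_lebesgue_integrable_mult_right)
  have i2: "interval_lebesgue_integrable lborel a b (\<lambda>x. t\<^sup>2 * g x ^ 2)"
    using g2 by (rule interval_lebesgue_integrable_mult_right)
  have "0 \<le> (LBINT x=a..b. (f x - t * g x)\<^sup>2)" by (rule interval_integral_nonneg_open[OF ab]) simp
  also have "\<dots> = (LBINT x=a..b. (f x ^ 2 - 2 * t * (f x * g x)) + t\<^sup>2 * g x ^ 2)"
    by (simp add: power2_eq_square algebra_simps)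
  also have "\<dots> = (LBINT x=a..b. f x ^ 2 - 2 * t * (f x * g x)) + (LBINT x=a..b. t\<^sup>2 * g x ^ 2)"
    by (rule interval_lebesgue_integral_add(2)[OF i1 i2])
  also have "(LBINT x=a..b. f x ^ 2 - 2 * t * (f x * g x)) = (LBINT x=a..b. f x ^ 2) - (LBINT x=a..b. 2 * t * (f x * g x))"
    by (rule interval_lebesgue_integral_diff(2)[OF f2 interval_lebesgue_integrable_mult_right[OF fg]])
  finally show "0 \<le> (LBINT x=a..b. f x ^ 2) - 2 * t * (LBINT x=a..b. f x * g x) + t\<^sup>2 * (LBINT x=a..b. g x ^ 2)"
    by simp
qed

lemma continuous_zero_if_sq_interval_integral_zero:
  fixes f :: "real \<Rightarrow> real"
  assumes ab: "a < b" and c: "continuous_on {a..b} f" and z: "(LBINT x=a..b. f x ^ 2) = 0"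
    and x: "x \<in> {a..b}"
  shows "f x = 0"
proof -
  have c2: "continuous_on {a..b} (\<lambda>x. f x ^ 2)" using c by (intro continuous_intros)
  have si: "set_integrable lborel {a..b} (\<lambda>x. f x ^ 2)" by (rule borel_integrable_atLeastAtMost'[OF c2])
  have "integral {a..b} (\<lambda>x. f x ^ 2) = 0"
    using set_borel_integral_eq_integral(2)[OF si] z ab by (simp add: interval_integral_Icc)
  then have "((\<lambda>x. f x ^ 2) has_integral 0) (cbox a b)"
    using set_borel_integral_eq_integral(1)[OF si] by (metis box_real(2) has_integral_integral)
  then have "f x ^ 2 = 0"
    by (rule has_integral_0_cbox_imp_0[rotated 2]) (use c2 ab x in auto)
  then show "f x = 0" by simp
qed

lemma interval_integrable_abs:
  fixes f :: "real \<Rightarrow> real"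
  shows "interval_lebesgue_integrable lborel a b f \<Longrightarrow> interval_lebesgue_integrable lborel a b (\<lambda>x. \<bar>f x\<bar>)"
  unfolding interval_lebesgue_integrable_def by (auto intro: set_integrable_abs)

lemma interval_integral_power_shift:
  fixes a x :: real
  assumes "a \<le> x"
  shows "(LBINT t=a..x. (t - a) ^ n) = (x - a) ^ Suc n / Suc n"
proof -
  have "(LBINT t=a..x. (t - a) ^ n) = (x - a) ^ Suc n / Suc n - (a - a) ^ Suc n / Suc n"
  proof (rule interval_integral_FTC_finite)
    show "continuous_on {min a x..max a x} (\<lambda>t. (t - a) ^ n)" by (intro continuous_intros)
    show "((\<lambda>t. (t - a) ^ Suc n / Suc n) has_vector_derivative (t - a) ^ n) (at t within {min a x..max a x})" for t
      unfolding has_real_derivative_iff_has_vector_derivative[symmetric]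
      by (auto intro!: derivative_eq_intros simp del: power_Suc)
  qed
  then show ?thesis by simp
qed

lemma zero_if_energy_nonpos:
  fixes f :: "real \<Rightarrow> real" and lam Q :: real
  assumes "lam < 0" "a < b" "continuous_on {a..b} f" "0 \<le> Q"
    and "Q - lam * (LBINT x=a..b. f x ^ 2) \<le> 0" "x \<in> {a..b}"
  shows "f x = 0"
proof (rule continuous_zero_if_sq_interval_integral_zero[OF assms(2,3) _ assms(6)])
  have "0 \<le> (LBINT x=a..b. f x ^ 2)" by (rule interval_integral_nonneg_open) (use assms in auto)
  moreover from this have "lam * (LBINT x=a..b. f x ^ 2) \<le> 0"
    using assms(1) by (simp add: mult_nonpos_nonneg)
  ultimately have "lam * (LBINT x=a..b. f x ^ 2) = 0"
    using assms(4,5) by linarith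
  then show "(LBINT x=a..b. f x ^ 2) = 0" using assms(1) by simp
qed

lemma abs_le_of_sq_le_mult:
  fixes N X P c t :: real
  assumes "0 \<le> N" "0 \<le> t" "0 < c" "c * X \<le> t * \<bar>P\<bar>" "P\<^sup>2 \<le> N * X"
  shows "\<bar>P\<bar> \<le> t * N / c"
proof (cases "P = 0")
  case False
  have "\<bar>P\<bar> * \<bar>P\<bar> \<le> N * X" using assms(5) by (simp add: power2_eq_square abs_mult_self_eq)
  also have "\<dots> \<le> N * (t * \<bar>P\<bar> / c)"
    using assms(1,3,4) by (intro mult_left_mono) (simp_all add: field_simps)
  finally have "\<bar>P\<bar> * \<bar>P\<bar> \<le> (t * N / c) * \<bar>P\<bar>" by (simp add: field_simps)
  moreover have "0 < \<bar>P\<bar>" using False by simp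
  ultimately show ?thesis by (rule mult_right_le_imp_le)
qed (use assms in simp)

section \<open>Indefinite integrals\<close>

definition indef_integral :: "real \<Rightarrow> real \<Rightarrow> (real \<Rightarrow> real) \<Rightarrow> (real \<Rightarrow> real) \<Rightarrow> bool" where
  "indef_integral a b F f \<longleftrightarrow> a \<le> b \<and> interval_lebesgue_integrable lborel a b f \<and>
      (\<forall>x\<in>{a..b}. F x = F a + (LBINT t=a..x. f t))"

lemma indef_integralD:
  assumes "indef_integral a b F f"
  shows "a \<le> b" "interval_lebesgue_integrable lborel a b f"
    "\<And>x. x \<in> {a..b} \<Longrightarrow> F x = F a + (LBINT t=a..x. f t)"
  using assms unfolding indef_integral_def by blast+

lemma indef_integralI:
  assumes "a \<le> b" "interval_lebesgue_integrable lborel a b f"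
    "\<And>x. x \<in> {a..b} \<Longrightarrow> F x = F a + (LBINT t=a..x. f t)"
  shows "indef_integral a b F f"
  using assms unfolding indef_integral_def by blast

lemma indef_integral_continuous:
  assumes "indef_integral a b F f"
  shows "continuous_on {a..b} F"
proof -
  note F = indef_integralD[OF assms]
  have "continuous_on {a..b} (\<lambda>x. F a + (LBINT t=a..x. f t))"
    by (intro continuous_on_add continuous_on_const interval_integral_continuous_upper F(1,2))
  then show ?thesis using F(3) by (metis (no_types, lifting) continuous_on_cong)
qed

lemma indef_integral_subinterval:
  assumes "indef_integral a b F f" "a \<le> c" "c \<le> d" "d \<le> b"
  shows "indef_integral c d F f"
proof (rule indef_integralI)
  note F = indef_integralD[OF assms(1)]
  show "c \<le> d" by fact
  show "interval_lebesgue_integrable lborel c d f"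
    using assms F interval_integrable_subinterval by blast
  fix x assume x: "x \<in> {c..d}"
  have "(LBINT t=a..c. f t) + (LBINT t=c..x. f t) = (LBINT t=a..x. f t)"
    by (rule interval_integral_sum)
       (use interval_integrable_subinterval[OF _ _ _ F(2), of a x] assms x in \<open>auto simp: min_def max_def\<close>)
  moreover have "x \<in> {a..b}" "c \<in> {a..b}" using x assms by auto
  ultimately show "F x = F c + (LBINT t=c..x. f t)" using F(3)[of x] F(3)[of c] by linarith
qed

lemma indef_integral_of_derivative:
  fixes F f :: "real \<Rightarrow> real"
  assumes "a \<le> b" "continuous_on {a..b} f"
    and "\<And>x. x \<in> {a..b} \<Longrightarrow> (F has_real_derivative f x) (at x within {a..b})"
  shows "indef_integral a b F f"
proof (rule indef_integralI)
  show "interval_lebesgue_integrable lborel a b f" by (rule interval_integrable_continuous_on) fact+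
  fix x assume x: "x \<in> {a..b}"
  have "(LBINT t=a..x. f t) = F x - F a"
  proof (rule interval_integral_FTC_finite)
    show "continuous_on {min a x..max a x} f" using x assms(2) by (auto intro: continuous_on_subset)
    fix y assume "min a x \<le> y" "y \<le> max a x"
    then have y: "y \<in> {a..b}" "{min a x..max a x} \<subseteq> {a..b}" using x by auto
    show "(F has_vector_derivative f y) (at y within {min a x..max a x})"
      using has_vector_derivative_within_subset[OF assms(3)[OF y(1), unfolded has_real_derivative_iff_has_vector_derivative] y(2)] .
  qed
  then show "F x = F a + (LBINT t=a..x. f t)" by simp
qed fact

lemma indef_integral_diff:
  assumes "indef_integral a b F f" "indef_integral a b G g"
  shows "indef_integral a b (\<lambda>x. F x - G x) (\<lambda>x. f x - g x)"
proof (rule indef_integralI)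
  note F = indef_integralD[OF assms(1)] and G = indef_integralD[OF assms(2)]
  show "a \<le> b" by (rule F(1))
  show "interval_lebesgue_integrable lborel a b (\<lambda>x. f x - g x)"
    using F G by (intro interval_lebesgue_integral_diff(1)) auto
  fix x assume x: "x \<in> {a..b}"
  have "interval_lebesgue_integrable lborel a x f" "interval_lebesgue_integrable lborel a x g"
    using F G x by (auto intro: interval_integrable_subinterval)
  from interval_lebesgue_integral_diff(2)[OF this]
  show "F x - G x = F a - G a + (LBINT t=a..x. f t - g t)"
    using F(3)[OF x] G(3)[OF x] by linarith
qed

lemma indef_integral_cmult:
  assumes "indef_integral a b F f"
  shows "indef_integral a b (\<lambda>x. c * F x) (\<lambda>x. c * f x)"
proof (rule indef_integralI)
  note F = indef_integralD[OF assms]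
  show "a \<le> b" by (rule F(1))
  show "interval_lebesgue_integrable lborel a b (\<lambda>x. c * f x)" using F by auto
  show "c * F x = c * F a + (LBINT t=a..x. c * f t)" if "x \<in> {a..b}" for x
    using F(3)[OF that] by (simp add: algebra_simps)
qed

lemma indef_integral_join:
  assumes F: "indef_integral a b F f" and G: "indef_integral b c G g" and "F b = G b"
  shows "indef_integral a c (\<lambda>x. if x \<le> b then F x else G x) (\<lambda>x. if x \<le> b then f x else g x)"
proof -
  note F' = indef_integralD[OF F] and G' = indef_integralD[OF G]
  let ?H = "\<lambda>x. if x \<le> b then F x else G x" and ?h = "\<lambda>x. if x \<le> b then f x else g x"
  have ih1: "interval_lebesgue_integrable lborel a b ?h"
    by (rule interval_integrable_cong_open[OF F'(1) _ F'(2)]) simp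
  have ih2: "interval_lebesgue_integrable lborel b c ?h"
    by (rule interval_integrable_cong_open[OF G'(1) _ G'(2)]) simp
  have ih: "interval_lebesgue_integrable lborel a c ?h"
    by (rule interval_integrable_join[OF F'(1) G'(1) ih1 ih2])
  show ?thesis
  proof (rule indef_integralI)
    show "a \<le> c" using F'(1) G'(1) by simp
    fix x assume x: "x \<in> {a..c}"
    show "?H x = ?H a + (LBINT t=a..x. ?h t)"
    proof (cases "x \<le> b")
      case True
      have "(LBINT t=a..x. ?h t) = (LBINT t=a..x. f t)"
        by (rule interval_integral_cong_open) (use x True in auto)
      then show ?thesis using F'(3)[of x] x True F'(1) by simp
    next
      case False
      have "(LBINT t=a..b. ?h t) + (LBINT t=b..x. ?h t) = (LBINT t=a..x. ?h t)"
        by (rule interval_integral_sum)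
           (use interval_integrable_subinterval[OF _ _ _ ih, of a x] x False F'(1) in \<open>simp add: min_def max_def\<close>)
      moreover have "(LBINT t=a..b. ?h t) = (LBINT t=a..b. f t)"
        by (rule interval_integral_cong_open) (use F'(1) in auto)
      moreover have "(LBINT t=b..x. ?h t) = (LBINT t=b..x. g t)"
        by (rule interval_integral_cong_open) (use x False in auto)
      ultimately show ?thesis
        using F'(3)[of b] G'(3)[of x] x False F'(1) \<open>F b = G b\<close> by simp
    qed
  qed (rule ih)
qed

lemma integrable_product_kernel:
  fixes f g :: "real \<Rightarrow> real"
  assumes f: "integrable lborel f" and g: "integrable lborel g"
  shows "integrable (lborel \<Otimes>\<^sub>M lborel) (\<lambda>(x,t). f x * g t)"
proof (rule lborel_pair.Fubini_integrable)
  have [measurable]: "f \<in> borel_measurable lborel" "g \<in> borel_measurable lborel"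
    using f g by auto
  show "(\<lambda>(x,t). f x * g t) \<in> borel_measurable (lborel \<Otimes>\<^sub>M lborel)" by measurable
  have "integrable lborel (\<lambda>x. \<bar>f x\<bar> * (\<integral>t. \<bar>g t\<bar> \<partial>lborel))"
    using f by (intro integrable_mult_left integrable_abs)
  then show "integrable lborel (\<lambda>x. \<integral>t. norm (case (x, t) of (x, t) \<Rightarrow> f x * g t) \<partial>lborel)"
    by (simp add: abs_mult)
  show "AE x in lborel. integrable lborel (\<lambda>t. case (x, t) of (x, t) \<Rightarrow> f x * g t)"
    using g by (auto intro: integrable_mult_right)
qed

lemma integral_product_triangles:
  fixes f g :: "real \<Rightarrow> real"
  assumes f: "integrable lborel f" and g: "integrable lborel g"
  shows "(\<integral>x. f x * (\<integral>t. g t * indicator {..x} t \<partial>lborel) \<partial>lborel)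
       + (\<integral>t. g t * (\<integral>x. f x * indicator {..<t} x \<partial>lborel) \<partial>lborel)
       = (\<integral>x. f x \<partial>lborel) * (\<integral>t. g t \<partial>lborel)"
proof -
  have [measurable]: "f \<in> borel_measurable lborel" "g \<in> borel_measurable lborel"
    using f g by auto
  note k = integrable_product_kernel[OF f g]
  define h1 where "h1 = (\<lambda>x t. if t \<le> x then f x * g t else (0::real))"
  define h2 where "h2 = (\<lambda>x t. if x < t then f x * g t else (0::real))"
  have h1i: "integrable (lborel \<Otimes>\<^sub>M lborel) (case_prod h1)"
    by (rule Bochner_Integration.integrable_bound[OF k]) (auto simp: h1_def)
  have h2i: "integrable (lborel \<Otimes>\<^sub>M lborel) (case_prod h2)"
    by (rule Bochner_Integration.integrable_bound[OF k]) (auto simp: h2_def)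
  have "(\<integral>x. f x * (\<integral>t. g t * indicator {..x} t \<partial>lborel) \<partial>lborel) = (\<integral>x. (\<integral>t. h1 x t \<partial>lborel) \<partial>lborel)"
    by (rule Bochner_Integration.integral_cong[OF refl])
       (auto simp: h1_def indicator_def intro!: Bochner_Integration.integral_cong simp flip: integral_mult_right_zero)
  also have "\<dots> = integral\<^sup>L (lborel \<Otimes>\<^sub>M lborel) (case_prod h1)"
    by (rule lborel_pair.integral_fst[OF h1i])
  finally have e1: "(\<integral>x. f x * (\<integral>t. g t * indicator {..x} t \<partial>lborel) \<partial>lborel)
      = integral\<^sup>L (lborel \<Otimes>\<^sub>M lborel) (case_prod h1)" .
  have "(\<integral>t. g t * (\<integral>x. f x * indicator {..<t} x \<partial>lborel) \<partial>lborel) = (\<integral>t. (\<integral>x. h2 x t \<partial>lborel) \<partial>lborel)"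
    by (rule Bochner_Integration.integral_cong[OF refl])
       (auto simp: h2_def indicator_def intro!: Bochner_Integration.integral_cong simp flip: integral_mult_right_zero)
  also have "\<dots> = integral\<^sup>L (lborel \<Otimes>\<^sub>M lborel) (case_prod h2)"
    by (rule lborel_pair.integral_snd[OF h2i])
  finally have e2: "(\<integral>t. g t * (\<integral>x. f x * indicator {..<t} x \<partial>lborel) \<partial>lborel)
      = integral\<^sup>L (lborel \<Otimes>\<^sub>M lborel) (case_prod h2)" .
  have "integral\<^sup>L (lborel \<Otimes>\<^sub>M lborel) (case_prod h1) + integral\<^sup>L (lborel \<Otimes>\<^sub>M lborel) (case_prod h2)
      = integral\<^sup>L (lborel \<Otimes>\<^sub>M lborel) (\<lambda>p. case_prod h1 p + case_prod h2 p)"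
    by (rule Bochner_Integration.integral_add[symmetric, OF h1i h2i])
  also have "\<dots> = integral\<^sup>L (lborel \<Otimes>\<^sub>M lborel) (\<lambda>(x,t). f x * g t)"
    by (rule Bochner_Integration.integral_cong) (auto simp: h1_def h2_def)
  also have "\<dots> = (\<integral>x. (\<integral>t. f x * g t \<partial>lborel) \<partial>lborel)"
    by (rule lborel_pair.integral_fst[symmetric]) (use k in simp)
  also have "\<dots> = (\<integral>x. f x \<partial>lborel) * (\<integral>t. g t \<partial>lborel)"
    by simp
  finally show ?thesis using e1 e2 by simp
qed

lemma indef_integral_by_parts_from_start:
  fixes F f G g :: "real \<Rightarrow> real"
  assumes F: "indef_integral a b F f" and G: "indef_integral a b G g"
  shows "(LBINT x=a..b. f x * (G x - G a)) + (LBINT x=a..b. g x * (F x - F a)) = (F b - F a) * (G b - G a)"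
proof -
  note F' = indef_integralD[OF F] and G' = indef_integralD[OF G]
  have ab: "a \<le> b" by (rule F'(1))
  define ft where "ft = (\<lambda>x. indicator {a..b} x * f x)"
  define gt where "gt = (\<lambda>x. indicator {a..b} x * g x)"
  have fti: "integrable lborel ft" unfolding ft_def using F'(2) ab interval_integrable_iff_indicator by blast
  have gti: "integrable lborel gt" unfolding gt_def using G'(2) ab interval_integrable_iff_indicator by blast
  have inner1: "ft x * (\<integral>t. gt t * indicator {..x} t \<partial>lborel) = indicator {a..b} x * (f x * (G x - G a))" for x
  proof (cases "x \<in> {a..b}")
    case True
    have "(\<integral>t. gt t * indicator {..x} t \<partial>lborel) = (\<integral>t. indicator {a..x} t * g t \<partial>lborel)"
      unfolding gt_def using True by (intro Bochner_Integration.integral_cong) (auto simp: indicator_def)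
    also have "\<dots> = G x - G a" using G'(3)[OF True] True by (simp add: interval_integral_indicator)
    finally show ?thesis unfolding ft_def using True by simp
  qed (simp add: ft_def)
  have inner2: "gt t * (\<integral>x. ft x * indicator {..<t} x \<partial>lborel) = indicator {a..b} t * (g t * (F t - F a))" for t
  proof (cases "t \<in> {a..b}")
    case True
    have "(\<integral>x. ft x * indicator {..<t} x \<partial>lborel) = (LINT x:{a..<t}|lborel. f x)"
      unfolding ft_def set_lebesgue_integral_def using True
      by (intro Bochner_Integration.integral_cong) (auto simp: indicator_def)
    also have "\<dots> = (LINT x:{a..t}|lborel. f x)"
      by (rule set_integral_discrete_difference[where X="{t}"]) auto
    also have "\<dots> = F t - F a" using F'(3)[OF True] True by (simp add: interval_integral_Icc)
    finally show ?thesis unfolding gt_def using True by simp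
  qed (simp add: gt_def)
  have "(\<integral>x. ft x \<partial>lborel) = F b - F a" "(\<integral>x. gt x \<partial>lborel) = G b - G a"
    unfolding ft_def gt_def using F'(3)[of b] G'(3)[of b] ab by (simp_all add: interval_integral_indicator)
  then show ?thesis
    using integral_product_triangles[OF fti gti] unfolding inner1 inner2 using ab
    by (simp add: interval_integral_indicator)
qed

lemma indef_integral_by_parts:
  fixes F f G g :: "real \<Rightarrow> real"
  assumes F: "indef_integral a b F f" and G: "indef_integral a b G g"
  shows "interval_lebesgue_integrable lborel a b (\<lambda>x. f x * G x + F x * g x)"
    and "(LBINT x=a..b. f x * G x + F x * g x) = F b * G b - F a * G a"
proof -
  note F' = indef_integralD[OF F] and G' = indef_integralD[OF G]
  have ab: "a \<le> b" by (rule F'(1))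
  have Fc: "continuous_on {a..b} F" and Gc: "continuous_on {a..b} G"
    using indef_integral_continuous F G by blast+
  have i1: "interval_lebesgue_integrable lborel a b (\<lambda>x. f x * G x)"
    by (rule interval_integrable_mult_continuous[OF ab F'(2) Gc])
  have i2: "interval_lebesgue_integrable lborel a b (\<lambda>x. F x * g x)"
    using interval_integrable_mult_continuous[OF ab G'(2) Fc] by (simp add: mult.commute)
  show "interval_lebesgue_integrable lborel a b (\<lambda>x. f x * G x + F x * g x)"
    using i1 i2 by (rule interval_lebesgue_integral_add(1))
  have j1: "interval_lebesgue_integrable lborel a b (\<lambda>x. f x * (G x - G a))"
    by (rule interval_integrable_mult_continuous[OF ab F'(2)]) (intro continuous_intros Gc)
  have j2: "interval_lebesgue_integrable lborel a b (\<lambda>x. g x * (F x - F a))"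
    by (rule interval_integrable_mult_continuous[OF ab G'(2)]) (intro continuous_intros Fc)
  have j3: "interval_lebesgue_integrable lborel a b (\<lambda>x. G a * f x + F a * g x)"
    using F'(2) G'(2) by (intro interval_lebesgue_integral_add(1)) auto
  have "(LBINT x=a..b. f x * G x + F x * g x)
      = (LBINT x=a..b. (f x * (G x - G a) + g x * (F x - F a)) + (G a * f x + F a * g x))"
    by (simp add: algebra_simps)
  also have "\<dots> = (LBINT x=a..b. f x * (G x - G a)) + (LBINT x=a..b. g x * (F x - F a))
      + (LBINT x=a..b. G a * f x + F a * g x)"
    using j1 j2 j3 by (simp add: interval_lebesgue_integral_add)
  also have "(LBINT x=a..b. G a * f x + F a * g x) = G a * (F b - F a) + F a * (G b - G a)"
    using F'(2) G'(2) F'(3)[of b] G'(3)[of b] ab by (simp add: interval_lebesgue_integral_add)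
  finally show "(LBINT x=a..b. f x * G x + F x * g x) = F b * G b - F a * G a"
    using indef_integral_by_parts_from_start[OF F G] by (simp add: algebra_simps)
qed
lemma indef_integral_mult:
  fixes F f G g :: "real \<Rightarrow> real"
  assumes F: "indef_integral a b F f" and G: "indef_integral a b G g"
  shows "indef_integral a b (\<lambda>x. F x * G x) (\<lambda>x. f x * G x + F x * g x)"
proof (rule indef_integralI)
  show "a \<le> b" using indef_integralD(1)[OF F] .
  show "interval_lebesgue_integrable lborel a b (\<lambda>x. f x * G x + F x * g x)"
    by (rule indef_integral_by_parts(1)[OF F G])
  fix x assume x: "x \<in> {a..b}"
  have "indef_integral a x F f" "indef_integral a x G g"
    using x by (auto intro: indef_integral_subinterval[OF F] indef_integral_subinterval[OF G])
  from indef_integral_by_parts(2)[OF this]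
  show "F x * G x = F a * G a + (LBINT t=a..x. f t * G t + F t * g t)" by simp
qed

lemma indef_integral_cong_deriv:
  assumes "indef_integral a b F f" "\<And>x. a < x \<Longrightarrow> x < b \<Longrightarrow> f x = g x"
  shows "indef_integral a b F g"
proof (rule indef_integralI)
  note F = indef_integralD[OF assms(1)]
  show "a \<le> b" by (rule F(1))
  show "interval_lebesgue_integrable lborel a b g"
    by (rule interval_integrable_cong_open[OF F(1) assms(2) F(2)])
  show "F x = F a + (LBINT t=a..x. g t)" if "x \<in> {a..b}" for x
    using F(3)[OF that] interval_integral_cong_open[of a x f g] assms(2) that by auto
qed

lemma indef_integral_sq_le:
  fixes f f' :: "real \<Rightarrow> real"
  assumes "indef_integral c d f f'" "interval_lebesgue_integrable lborel c d (\<lambda>x. f' x ^ 2)"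
  shows "(f d - f c)\<^sup>2 \<le> (d - c) * (LBINT t=c..d. f' t ^ 2)"
proof -
  note F = indef_integralD[OF assms(1)]
  have "(LBINT t=c..d. 1 * f' t)\<^sup>2 \<le> (LBINT t=c..d. 1 ^ 2) * (LBINT t=c..d. f' t ^ 2)"
    by (rule interval_integral_Cauchy_Schwarz) (use F assms(2) in auto)
  then show ?thesis using F(1) F(3)[of d] by simp
qed

lemma indef_integral_sq_le_dist:
  fixes f f' :: "real \<Rightarrow> real"
  assumes f: "indef_integral a b f f'" and f2: "interval_lebesgue_integrable lborel a b (\<lambda>x. f' x ^ 2)"
    and x0: "x0 \<in> {a..b}" and x: "x \<in> {a..b}" and "f x0 = 0"
  defines "E \<equiv> \<lambda>x. LBINT t=a..x. f' t ^ 2"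
  shows "f x ^ 2 \<le> \<bar>x - x0\<bar> * \<bar>E x - E x0\<bar>"
proof -
  have ab: "a \<le> b" by (rule indef_integralD(1)[OF f])
  have E: "indef_integral a b E (\<lambda>x. f' x ^ 2)"
    by (rule indef_integralI[OF ab f2]) (simp add: E_def)
  show ?thesis
  proof (cases "x0 < x")
    case True
    then have sub: "a \<le> x0" "x0 \<le> x" "x \<le> b" using x x0 by auto
    have "(f x - f x0)\<^sup>2 \<le> (x - x0) * (LBINT t=x0..x. f' t ^ 2)"
      by (rule indef_integral_sq_le[OF indef_integral_subinterval[OF f sub]
            interval_integrable_subinterval[OF sub f2]])
    also have "(LBINT t=x0..x. f' t ^ 2) = E x - E x0"
      using indef_integralD(3)[OF indef_integral_subinterval[OF E sub], of x] sub by simp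
    also have "(x - x0) * (E x - E x0) \<le> \<bar>x - x0\<bar> * \<bar>E x - E x0\<bar>"
      by (metis abs_ge_self abs_mult)
    finally show ?thesis using \<open>f x0 = 0\<close> by simp
  next
    case False
    then have sub: "a \<le> x" "x \<le> x0" "x0 \<le> b" using x x0 by auto
    have "(f x0 - f x)\<^sup>2 \<le> (x0 - x) * (LBINT t=x..x0. f' t ^ 2)"
      by (rule indef_integral_sq_le[OF indef_integral_subinterval[OF f sub]
            interval_integrable_subinterval[OF sub f2]])
    also have "(LBINT t=x..x0. f' t ^ 2) = E x0 - E x"
      using indef_integralD(3)[OF indef_integral_subinterval[OF E sub], of x0] sub by simp
    also have "(x0 - x) * (E x0 - E x) \<le> \<bar>x - x0\<bar> * \<bar>E x - E x0\<bar>"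
      by (metis abs_ge_self abs_minus_commute abs_mult)
    finally show ?thesis using \<open>f x0 = 0\<close> by simp
  qed
qed

lemma sq_div_dist_tendsto_zero:
  fixes f f' :: "real \<Rightarrow> real"
  assumes f: "indef_integral a b f f'" and f2: "interval_lebesgue_integrable lborel a b (\<lambda>x. f' x ^ 2)"
    and x0: "x0 \<in> {a..b}" and "f x0 = 0"
  shows "((\<lambda>x. f x ^ 2 / \<bar>x - x0\<bar>) \<longlongrightarrow> 0) (at x0 within {a..b})"
proof -
  define E where "E x = (LBINT t=a..x. f' t ^ 2)" for x :: real
  have ab: "a \<le> b" by (rule indef_integralD(1)[OF f])
  have E: "indef_integral a b E (\<lambda>x. f' x ^ 2)"
    by (rule indef_integralI[OF ab f2]) (simp add: E_def)
  have bound: "f x ^ 2 / \<bar>x - x0\<bar> \<le> \<bar>E x - E x0\<bar>" if x: "x \<in> {a..b}" "x \<noteq> x0" for x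
    using indef_integral_sq_le_dist[OF f f2 x0 x(1) \<open>f x0 = 0\<close>] x
    by (simp add: E_def divide_le_eq mult.commute)
  have "(E \<longlongrightarrow> E x0) (at x0 within {a..b})"
    using indef_integral_continuous[OF E] x0 unfolding continuous_on_def by blast
  then have "((\<lambda>x. \<bar>E x - E x0\<bar>) \<longlongrightarrow> \<bar>E x0 - E x0\<bar>) (at x0 within {a..b})"
    by (intro tendsto_intros)
  then have lim: "((\<lambda>x. \<bar>E x - E x0\<bar>) \<longlongrightarrow> 0) (at x0 within {a..b})" by simp
  have "eventually (\<lambda>x. x \<in> {a..b} \<and> x \<noteq> x0) (at x0 within {a..b})"
    unfolding eventually_at_filter by simp
  then have upper: "eventually (\<lambda>x. f x ^ 2 / \<bar>x - x0\<bar> \<le> \<bar>E x - E x0\<bar>) (at x0 within {a..b})"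
    by eventually_elim (rule bound; blast)
  have lower: "eventually (\<lambda>x. 0 \<le> f x ^ 2 / \<bar>x - x0\<bar>) (at x0 within {a..b})"
    by (intro always_eventually allI) simp
  show ?thesis by (rule tendsto_sandwich[OF lower upper tendsto_const lim])
qed

lemma le_by_increment_bound:
  fixes H T :: "real \<Rightarrow> real"
  assumes ab: "a < b" and H: "continuous_on {a..b} H"
    and incr: "\<And>s t. a < s \<Longrightarrow> s \<le> t \<Longrightarrow> t < b \<Longrightarrow> T t - T s \<le> H t - H s"
    and left_end: "\<And>e. 0 < e \<Longrightarrow> eventually (\<lambda>s. T s \<le> e) (at_right a)"
    and right_end: "\<And>e. 0 < e \<Longrightarrow> eventually (\<lambda>t. - e \<le> T t) (at_left b)"
  shows "H a \<le> H b"
proof (rule field_le_epsilon)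
  fix e :: real assume "0 < e"
  then have e2: "0 < e / 2" by simp
  have ev: "eventually (\<lambda>s. - e \<le> H b - H s) (at_right a)"
    using left_end[OF e2] eventually_at_right_real[OF ab]
  proof eventually_elim
    case (elim s)
    then have "T s \<le> e / 2" "s \<in> {a<..<b}" "s < b" by auto
    have "((\<lambda>t. H t - H s) \<longlongrightarrow> H b - H s) (at_left b)"
      using H ab by (intro tendsto_intros continuous_on_Icc_at_leftD) auto
    moreover have "eventually (\<lambda>t. - e \<le> H t - H s) (at_left b)"
      using right_end[OF e2] eventually_at_left_real[OF \<open>s < b\<close>]
    proof eventually_elim
      case (elim t)
      then show ?case using incr[of s t] \<open>T s \<le> e / 2\<close> \<open>s \<in> {a<..<b}\<close> by auto
    qed
    ultimately show ?case by (rule tendsto_lowerbound) (simp add: trivial_limit_def[symmetric])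
  qed
  have "((\<lambda>s. H b - H s) \<longlongrightarrow> H b - H a) (at_right a)"
    using H ab by (intro tendsto_intros continuous_on_Icc_at_rightD) auto
  from tendsto_lowerbound[OF this ev] have "- e \<le> H b - H a"
    by (simp add: trivial_limit_def[symmetric])
  then show "H a \<le> H b + e" by simp
qed

section \<open>Linear second-order equations with bounded measurable coefficient\<close>

lemma LIMSEQ_of_summable_increments:
  fixes X :: "nat \<Rightarrow> real"
  assumes "summable (\<lambda>n. X (Suc n) - X n)"
  shows "X \<longlonglongrightarrow> X 0 + (\<Sum>n. X (Suc n) - X n)"
proof -
  have "(\<lambda>n. X 0 + (\<Sum>i<n. X (Suc i) - X i)) \<longlonglongrightarrow> X 0 + (\<Sum>n. X (Suc n) - X n)"
    by (intro tendsto_add tendsto_const summable_LIMSEQ[OF assms])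
  then show ?thesis by (simp add: sum_lessThan_telescope)
qed

locale linear_ode =
  fixes a b :: real and q :: "real \<Rightarrow> real" and L y0 p0 :: real
  assumes a_le_b: "a \<le> b" and q_measurable: "q \<in> borel_measurable lborel"
    and q_bound: "\<And>x. \<bar>q x\<bar> \<le> L" and one_le_L: "1 \<le> L"
begin

primrec picard :: "nat \<Rightarrow> (real \<Rightarrow> real) \<times> (real \<Rightarrow> real)" where
  "picard 0 = (\<lambda>x. y0, \<lambda>x. p0)"
| "picard (Suc n) = (\<lambda>x. y0 + (LBINT t=a..x. snd (picard n) t), \<lambda>x. p0 + (LBINT t=a..x. q t * fst (picard n) t))"

abbreviation "Y n \<equiv> fst (picard n)"

abbreviation "P n \<equiv> snd (picard n)"

declare picard.simps(2) [simp del]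

lemma Y_Suc: "Y (Suc n) x = y0 + (LBINT t=a..x. P n t)"
  and P_Suc: "P (Suc n) x = p0 + (LBINT t=a..x. q t * Y n t)"
  by (simp_all add: picard.simps)

lemma integrable_on_initial_segment:
  assumes "continuous_on {a..b} G" "x \<in> {a..b}"
  shows "interval_lebesgue_integrable lborel a x G"
    and "interval_lebesgue_integrable lborel a x (\<lambda>t. q t * G t)"
proof -
  have G: "continuous_on {a..x} G" using assms by (auto intro: continuous_on_subset)
  show "interval_lebesgue_integrable lborel a x G"
    using assms(2) G by (intro interval_integrable_continuous_on) auto
  have "interval_lebesgue_integrable lborel a x q"
    by (rule interval_integrable_bounded_measurable[OF _ _ q_bound]) (use assms(2) q_measurable in auto)
  then show "interval_lebesgue_integrable lborel a x (\<lambda>t. q t * G t)"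
    using assms(2) G by (intro interval_integrable_mult_continuous) auto
qed

lemma picard_continuous: "continuous_on {a..b} (Y n) \<and> continuous_on {a..b} (P n)"
proof (induction n)
  case (Suc n)
  then have "interval_lebesgue_integrable lborel a b (P n)"
    "interval_lebesgue_integrable lborel a b (\<lambda>t. q t * Y n t)"
    using integrable_on_initial_segment a_le_b by auto
  then show ?case unfolding Y_Suc P_Suc
    by (auto intro!: continuous_on_add continuous_on_const interval_integral_continuous_upper a_le_b)
qed simp

lemma picard_increments:
  assumes "x \<in> {a..b}"
  shows "Y (Suc (Suc n)) x - Y (Suc n) x = (LBINT t=a..x. P (Suc n) t - P n t)"
    and "P (Suc (Suc n)) x - P (Suc n) x = (LBINT t=a..x. q t * (Y (Suc n) t - Y n t))"
  using integrable_on_initial_segment[OF conjunct1[OF picard_continuous] assms]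
    integrable_on_initial_segment[OF conjunct2[OF picard_continuous] assms]
  unfolding Y_Suc[of "Suc n" x] Y_Suc[of n x] P_Suc[of "Suc n" x] P_Suc[of n x]
  by (simp_all add: interval_lebesgue_integral_diff(2) right_diff_distrib)

definition "D = (\<bar>p0\<bar> + L * \<bar>y0\<bar>) * (b - a)"

lemma D_nonneg: "0 \<le> D"
  unfolding D_def using a_le_b one_le_L by auto

definition "picard_gap n x = \<bar>Y (Suc n) x - Y n x\<bar> + \<bar>P (Suc n) x - P n x\<bar>"

lemma picard_gap_continuous: "continuous_on {a..b} (picard_gap n)"
  unfolding picard_gap_def[abs_def] using picard_continuous by (auto intro!: continuous_intros)

lemma picard_gap_0:
  assumes "x \<in> {a..b}"
  shows "picard_gap 0 x \<le> D"
proof -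
  have ax: "a \<le> x" "x \<le> b" using assms by auto
  have iq: "interval_lebesgue_integrable lborel a x (\<lambda>t. q t * y0)"
    using integrable_on_initial_segment(2)[of "\<lambda>t. y0" x] assms by auto
  have "\<bar>P 1 x - P 0 x\<bar> = \<bar>LBINT t=a..x. q t * y0\<bar>" by (simp add: P_Suc)
  also have "\<dots> \<le> (LBINT t=a..x. \<bar>q t * y0\<bar>)"
    by (rule interval_integral_abs_le[OF ax(1) iq])
  also have "\<dots> \<le> (LBINT t=a..x. L * \<bar>y0\<bar>)"
    by (rule interval_integral_mono_open[OF ax(1) interval_integrable_abs[OF iq]])
       (auto simp: abs_mult mult_right_mono q_bound)
  finally have "\<bar>P 1 x - P 0 x\<bar> \<le> L * \<bar>y0\<bar> * (x - a)" by (simp add: ac_simps)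
  moreover have "\<bar>Y 1 x - Y 0 x\<bar> = \<bar>p0\<bar> * (x - a)" using ax by (simp add: Y_Suc abs_mult)
  moreover have "(\<bar>p0\<bar> + L * \<bar>y0\<bar>) * (x - a) \<le> D"
    unfolding D_def using ax one_le_L by (intro mult_left_mono) auto
  ultimately show ?thesis by (simp add: picard_gap_def algebra_simps)
qed

lemma picard_gap_Suc:
  assumes x: "x \<in> {a..b}"
  shows "picard_gap (Suc n) x \<le> L * (LBINT t=a..x. picard_gap n t)"
proof -
  have ax: "a \<le> x" using x by auto
  define dY where "dY t = Y (Suc n) t - Y n t" for t
  define dP where "dP t = P (Suc n) t - P n t" for t
  have cY: "continuous_on {a..b} dY" and cP: "continuous_on {a..b} dP"
    unfolding dY_def dP_def using picard_continuous by (auto intro!: continuous_intros)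
  have iP: "interval_lebesgue_integrable lborel a x (\<lambda>t. \<bar>dP t\<bar>)"
    using integrable_on_initial_segment(1)[OF cP x] by (rule interval_integrable_abs)
  have iY: "interval_lebesgue_integrable lborel a x (\<lambda>t. L * \<bar>dY t\<bar>)"
    using interval_integrable_abs[OF integrable_on_initial_segment(1)[OF cY x]] by simp
  have iqY: "interval_lebesgue_integrable lborel a x (\<lambda>t. q t * dY t)"
    by (rule integrable_on_initial_segment(2)[OF cY x])
  have "\<bar>Y (Suc (Suc n)) x - Y (Suc n) x\<bar> \<le> (LBINT t=a..x. \<bar>dP t\<bar>)"
    unfolding picard_increments(1)[OF x] dP_def[symmetric]
    by (rule interval_integral_abs_le[OF ax integrable_on_initial_segment(1)[OF cP x]])
  moreover have "\<bar>P (Suc (Suc n)) x - P (Suc n) x\<bar> \<le> (LBINT t=a..x. \<bar>q t * dY t\<bar>)"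
    unfolding picard_increments(2)[OF x] dY_def[symmetric]
    by (rule interval_integral_abs_le[OF ax iqY])
  moreover have "(LBINT t=a..x. \<bar>q t * dY t\<bar>) \<le> (LBINT t=a..x. L * \<bar>dY t\<bar>)"
    by (rule interval_integral_mono_open[OF ax interval_integrable_abs[OF iqY] iY])
       (simp add: abs_mult mult_right_mono q_bound)
  ultimately have "picard_gap (Suc n) x \<le> (LBINT t=a..x. \<bar>dP t\<bar> + L * \<bar>dY t\<bar>)"
    using iP iY unfolding picard_gap_def by (simp add: interval_lebesgue_integral_add(2))
  also have "\<dots> \<le> (LBINT t=a..x. L * picard_gap n t)"
  proof (rule interval_integral_mono_open[OF ax])
    show "interval_lebesgue_integrable lborel a x (\<lambda>t. \<bar>dP t\<bar> + L * \<bar>dY t\<bar>)"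
      using iP iY by (rule interval_lebesgue_integral_add(1))
    show "interval_lebesgue_integrable lborel a x (\<lambda>t. L * picard_gap n t)"
      using integrable_on_initial_segment(1)[OF picard_gap_continuous x] by simp
    show "\<bar>dP t\<bar> + L * \<bar>dY t\<bar> \<le> L * picard_gap n t" for t
      using one_le_L mult_right_mono[of 1 L "\<bar>dP t\<bar>"]
      unfolding picard_gap_def dY_def dP_def by (simp add: algebra_simps)
  qed
  finally show ?thesis by simp
qed

lemma picard_gap_bound:
  assumes "x \<in> {a..b}"
  shows "picard_gap n x \<le> D * (L * (x - a)) ^ n / fact n"
  using assms
proof (induction n arbitrary: x)
  case 0
  then show ?case using picard_gap_0 by simp
next
  case (Suc n)
  then have ax: "a \<le> x" "x \<le> b" by auto
  have "picard_gap (Suc n) x \<le> L * (LBINT t=a..x. picard_gap n t)"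
    by (rule picard_gap_Suc[OF Suc.prems])
  also have "(LBINT t=a..x. picard_gap n t) \<le> (LBINT t=a..x. (D * L ^ n / fact n) * (t - a) ^ n)"
    using Suc.IH ax integrable_on_initial_segment(1)[OF picard_gap_continuous Suc.prems]
    by (intro interval_integral_mono_open)
       (auto intro!: interval_integrable_continuous_on continuous_intros simp: power_mult_distrib mult.assoc)
  also have "\<dots> = D * L ^ n / fact n * ((x - a) ^ Suc n / Suc n)"
    using interval_integral_power_shift[OF ax(1), of n] by simp
  finally have "picard_gap (Suc n) x \<le> L * (D * L ^ n / fact n * ((x - a) ^ Suc n / Suc n))"
    using one_le_L by (simp add: mult_left_mono)
  also have "\<dots> = D * (L ^ Suc n * (x - a) ^ Suc n) / fact (Suc n)"
    by (simp add: fact_Suc field_simps)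
  finally show ?case by (simp only: power_mult_distrib)
qed

definition "majorant n = D * (L * (b - a)) ^ n / fact n"

lemma summable_majorant: "summable majorant"
proof -
  have "summable (\<lambda>n. D * ((L * (b - a)) ^ n /\<^sub>R fact n))"
    by (intro summable_mult summable_exp_generic)
  then show ?thesis by (simp add: majorant_def[abs_def] divide_inverse mult_ac)
qed

lemma picard_increment_majorant:
  assumes "x \<in> {a..b}"
  shows "\<bar>Y (Suc n) x - Y n x\<bar> \<le> majorant n" "\<bar>P (Suc n) x - P n x\<bar> \<le> majorant n"
proof -
  have "(L * (x - a)) ^ n \<le> (L * (b - a)) ^ n"
    using assms one_le_L by (intro power_mono mult_left_mono) auto
  then have "D * (L * (x - a)) ^ n / fact n \<le> majorant n"
    unfolding majorant_def using D_nonneg by (intro divide_right_mono mult_left_mono) auto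
  then show "\<bar>Y (Suc n) x - Y n x\<bar> \<le> majorant n" "\<bar>P (Suc n) x - P n x\<bar> \<le> majorant n"
    using picard_gap_bound[OF assms, of n] unfolding picard_gap_def by auto
qed

definition "Ylim x = y0 + (\<Sum>n. Y (Suc n) x - Y n x)"

definition "Plim x = p0 + (\<Sum>n. P (Suc n) x - P n x)"

lemma picard_tendsto:
  assumes "x \<in> {a..b}"
  shows "(\<lambda>n. Y n x) \<longlonglongrightarrow> Ylim x" "(\<lambda>n. P n x) \<longlonglongrightarrow> Plim x"
proof -
  have "summable (\<lambda>n. Y (Suc n) x - Y n x)" "summable (\<lambda>n. P (Suc n) x - P n x)"
    using picard_increment_majorant[OF assms]
    by (auto intro: summable_comparison_test'[OF summable_majorant])
  from this[THEN LIMSEQ_of_summable_increments]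
  show "(\<lambda>n. Y n x) \<longlonglongrightarrow> Ylim x" "(\<lambda>n. P n x) \<longlonglongrightarrow> Plim x"
    by (simp_all add: Ylim_def Plim_def)
qed

definition "picard_bound = \<bar>y0\<bar> + \<bar>p0\<bar> + suminf majorant"

lemma picard_bounded:
  assumes "x \<in> {a..b}"
  shows "\<bar>Y n x\<bar> \<le> picard_bound" "\<bar>P n x\<bar> \<le> picard_bound"
proof -
  have "(\<Sum>k<n. majorant k) \<le> suminf majorant"
    using D_nonneg a_le_b one_le_L
    by (intro sum_le_suminf[OF summable_majorant]) (auto simp: majorant_def)
  moreover have "\<bar>\<Sum>k<n. Y (Suc k) x - Y k x\<bar> \<le> (\<Sum>k<n. majorant k)"
    "\<bar>\<Sum>k<n. P (Suc k) x - P k x\<bar> \<le> (\<Sum>k<n. majorant k)"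
    using picard_increment_majorant[OF assms] by (auto intro!: order_trans[OF sum_abs sum_mono])
  moreover have "Y n x = y0 + (\<Sum>k<n. Y (Suc k) x - Y k x)" "P n x = p0 + (\<Sum>k<n. P (Suc k) x - P k x)"
    by (simp_all add: sum_lessThan_telescope[of "\<lambda>k. Y k x"] sum_lessThan_telescope[of "\<lambda>k. P k x"])
  ultimately show "\<bar>Y n x\<bar> \<le> picard_bound" "\<bar>P n x\<bar> \<le> picard_bound"
    unfolding picard_bound_def by linarith+
qed

lemma picard_limit_integral_equations:
  assumes x: "x \<in> {a..b}"
  shows "interval_lebesgue_integrable lborel a x Plim" "Ylim x = y0 + (LBINT t=a..x. Plim t)"
    and "interval_lebesgue_integrable lborel a x (\<lambda>t. q t * Ylim t)"
    "Plim x = p0 + (LBINT t=a..x. q t * Ylim t)"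
proof -
  have ax: "a \<le> x" and sub: "{a..x} \<subseteq> {a..b}" using x by auto
  have mY: "(\<lambda>t. indicator {a..x} t * Y i t) \<in> borel_measurable lborel"
    and mP: "(\<lambda>t. indicator {a..x} t * P i t) \<in> borel_measurable lborel" for i
    using borel_measurable_continuous_on_indicator[OF _ continuous_on_subset[OF picard_continuous[THEN conjunct1] sub]]
      borel_measurable_continuous_on_indicator[OF _ continuous_on_subset[OF picard_continuous[THEN conjunct2] sub]]
    by simp_all
  have mqY: "(\<lambda>t. indicator {a..x} t * (q t * Y i t)) \<in> borel_measurable lborel" for i
    using borel_measurable_times[OF q_measurable mY[of i]] by (simp add: mult_ac)
  have bqY: "\<bar>q t * Y i t\<bar> \<le> L * picard_bound" if "t \<in> {a..x}" for i t
    unfolding abs_mult using picard_bounded(1)[of t i] that sub one_le_L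
    by (intro mult_mono q_bound) auto
  note DP = interval_integral_dominated_convergence[OF ax mP picard_tendsto(2) picard_bounded(2)]
  note DY = interval_integral_dominated_convergence[OF ax mqY tendsto_mult_left[OF picard_tendsto(1)] bqY]
  show "interval_lebesgue_integrable lborel a x Plim"
    "interval_lebesgue_integrable lborel a x (\<lambda>t. q t * Ylim t)"
    using DP(1) DY(1) sub by auto
  have "(\<lambda>i. Y (Suc i) x) \<longlonglongrightarrow> y0 + (LBINT t=a..x. Plim t)"
    unfolding Y_Suc using DP(2) sub by (auto intro: tendsto_add)
  then show "Ylim x = y0 + (LBINT t=a..x. Plim t)"
    using LIMSEQ_unique LIMSEQ_Suc[OF picard_tendsto(1)[OF x]] by blast
  have "(\<lambda>i. P (Suc i) x) \<longlonglongrightarrow> p0 + (LBINT t=a..x. q t * Ylim t)"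
    unfolding P_Suc using DY(2) sub by (auto intro: tendsto_add)
  then show "Plim x = p0 + (LBINT t=a..x. q t * Ylim t)"
    using LIMSEQ_unique LIMSEQ_Suc[OF picard_tendsto(2)[OF x]] by blast
qed

end

theorem linear_ode_exists:
  fixes q :: "real \<Rightarrow> real" and a b K y0 p0 :: real
  assumes "a \<le> b" "q \<in> borel_measurable lborel" "\<And>x. \<bar>q x\<bar> \<le> K"
  shows "\<exists>y p. indef_integral a b y p \<and> indef_integral a b p (\<lambda>x. q x * y x) \<and> y a = y0 \<and> p a = p0"
proof -
  interpret linear_ode a b q "max 1 K" y0 p0
    using assms by unfold_locales (auto simp: le_max_iff_disj)
  note E = picard_limit_integral_equations
  have "Ylim a = y0" "Plim a = p0" using E(2,4)[of a] assms(1) by simp_all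
  moreover have "indef_integral a b Ylim Plim" "indef_integral a b Plim (\<lambda>x. q x * Ylim x)"
    using E[of b] E(2,4) assms(1) calculation by (auto intro!: indef_integralI)
  ultimately show ?thesis by blast
qed

section \<open>The space \<open>H\<^sup>1\<^sub>0(-1, 1)\<close>\<close>

lemma ereal_minus_one: "(-1::ereal) = ereal (-1)"
  by (simp add: one_ereal_def)

lemma interval_integral_minus_one_one: "(LBINT y=-1..1. f y) = (LBINT y=(-1::real)..(1::real). f y)"
  by (simp add: ereal_minus_one one_ereal_def)

lemma H10_imp_indef_integral:
  assumes "H10 f f'"
  shows "indef_integral (-1) 1 f f'" "f (-1) = 0" "f 1 = 0"
    and "interval_lebesgue_integrable lborel (-1::real) (1::real) (\<lambda>x. f' x ^ 2)"
    and "f' \<in> borel_measurable lborel"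
proof -
  have m: "f' \<in> borel_measurable lborel" and s2: "set_integrable lborel {-1..1} (\<lambda>x. (f' x)\<^sup>2)"
    and e: "\<forall>x\<in>{-1..1}. f x = (LBINT t=-1..x. f' t)" and "f 1 = 0"
    using assms unfolding H10_def by auto
  then show "f' \<in> borel_measurable lborel" "f 1 = 0" by auto
  show "interval_lebesgue_integrable lborel (-1::real) (1::real) (\<lambda>x. f' x ^ 2)"
    using s2 by (simp add: interval_integrable_iff_set_integrable_Icc)
  have "integrable lborel (\<lambda>x. indicator {-1..1} x * f' x)"
  proof (rule Bochner_Integration.integrable_bound)
    show "integrable lborel (\<lambda>x. indicator {-1..1} x * 1 + indicator {-1..1} x * (f' x)\<^sup>2)"
      using s2 unfolding set_integrable_def
      by (intro Bochner_Integration.integrable_add integrable_mult_left integrable_real_indicator)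
         (auto simp: emeasure_lborel_Icc_eq)
    show "(\<lambda>x. indicator {-1..1} x * f' x) \<in> borel_measurable lborel" using m by measurable
    have "\<bar>y\<bar> \<le> 1 + y\<^sup>2" for y :: real
    proof -
      have "0 \<le> (\<bar>y\<bar> - 1)\<^sup>2" by simp
      then show ?thesis by (simp add: power2_eq_square algebra_simps abs_mult_self_eq)
    qed
    then show "AE x in lborel. norm (indicator {-1..1} x * f' x)
        \<le> norm (indicator {-1..1} x * 1 + indicator {-1..1} x * (f' x)\<^sup>2)"
      by (intro AE_I2) (auto simp: indicator_def)
  qed
  then have i1: "interval_lebesgue_integrable lborel (-1::real) (1::real) f'"
    by (simp add: interval_integrable_iff_indicator)
  show "f (-1) = 0" using e by (auto simp: ereal_minus_one)
  then show "indef_integral (-1) 1 f f'"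
    using e i1 by (intro indef_integralI) (auto simp: ereal_minus_one)
qed

lemma indef_integral_imp_H10:
  assumes "indef_integral (-1) 1 f f'" "f (-1) = 0" "f 1 = 0" "f' \<in> borel_measurable lborel"
    and "interval_lebesgue_integrable lborel (-1::real) (1::real) (\<lambda>x. f' x ^ 2)"
  shows "H10 f f'"
  unfolding H10_def
proof (intro conjI ballI)
  show "set_integrable lborel {-1..1} (\<lambda>x. (f' x)\<^sup>2)"
    using assms(5) by (simp add: interval_integrable_iff_set_integrable_Icc)
  show "f x = (LBINT t=-1..x. f' t)" if "x \<in> {-1..1}" for x
    using indef_integralD(3)[OF assms(1) that] assms(2) by (simp add: ereal_minus_one)
qed (use assms in auto)

lemma H10_join:
  assumes L: "indef_integral (-1) 0 L pL" "continuous_on {-1..0} pL" "L (-1) = 0"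
    and R: "indef_integral 0 1 R pR" "continuous_on {0..1} pR" "R 1 = 0" and "L 0 = R 0"
  shows "H10 (\<lambda>x. if x \<le> 0 then L x else R x) (\<lambda>x. indicator {-1..0} x * pL x + indicator {0<..1} x * pR x)"
proof (rule indef_integral_imp_H10)
  let ?\<Phi>' = "\<lambda>x. indicator {-1..0} x * pL x + indicator {0<..1} x * pR x"
  have "indef_integral (-1) 1 (\<lambda>x. if x \<le> 0 then L x else R x) (\<lambda>x. if x \<le> 0 then pL x else pR x)"
    by (rule indef_integral_join[OF L(1) R(1) \<open>L 0 = R 0\<close>])
  then show "indef_integral (-1) 1 (\<lambda>x. if x \<le> 0 then L x else R x) ?\<Phi>'"
    by (rule indef_integral_cong_deriv) auto
  have "continuous_on {0<..1} pR" by (rule continuous_on_subset[OF R(2)]) auto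
  then have "(\<lambda>x. indicator {-1..0} x * pL x) \<in> borel_measurable lborel"
    "(\<lambda>x. indicator {0<..1} x * pR x) \<in> borel_measurable lborel"
    using borel_measurable_continuous_on_indicator[OF _ L(2)]
      borel_measurable_continuous_on_indicator[of "{0<..1}" pR]
    by auto
  then show "?\<Phi>' \<in> borel_measurable lborel" by measurable
  show "interval_lebesgue_integrable lborel (-1::real) (1::real) (\<lambda>x. ?\<Phi>' x ^ 2)"
  proof (rule interval_integrable_join)
    show "interval_lebesgue_integrable lborel (-1::real) (0::real) (\<lambda>x. ?\<Phi>' x ^ 2)"
      by (rule interval_integrable_cong_open[OF _ _ interval_integrable_continuous_on[of "-1" 0 "\<lambda>x. pL x ^ 2"]])
         (use L(2) in \<open>auto intro!: continuous_intros\<close>)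
    show "interval_lebesgue_integrable lborel (0::real) (1::real) (\<lambda>x. ?\<Phi>' x ^ 2)"
      by (rule interval_integrable_cong_open[OF _ _ interval_integrable_continuous_on[of 0 1 "\<lambda>x. pR x ^ 2"]])
         (use R(2) in \<open>auto intro!: continuous_intros\<close>)
  qed auto
qed (use L(3) R(3) in auto)

lemma Ck_on_mono:
  assumes "Ck_on k S f" "j < k"
  shows "Ck_on j S f"
  unfolding Ck_on_def
proof
  show "\<forall>i<j. \<forall>x\<in>S. (deriv ^^ i) f differentiable at x"
    using assms unfolding Ck_on_def by auto
  have "\<forall>x\<in>S. (deriv ^^ j) f differentiable at x"
    using assms unfolding Ck_on_def by auto
  then show "continuous_on S ((deriv ^^ j) f)"
    by (intro continuous_at_imp_continuous_on) (auto intro: differentiable_imp_continuous_within)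
qed

locale monotone_profile =
  fixes U :: "real \<Rightarrow> real" and c\<^sub>0 C :: real
  assumes U_C2: "Ck_on 2 {-1<..<1} U"
    and c0_pos: "0 < c\<^sub>0"
    and deriv_U_gt: "\<And>y. y \<in> {-1<..<1} \<Longrightarrow> c\<^sub>0 < deriv U y"
    and U_0: "U 0 = 0"
    and V_bounds: "\<And>y. y \<in> {-1<..<1} \<Longrightarrow> - C \<le> deriv (deriv U) y / U y \<and> deriv (deriv U) y / U y \<le> 0"
begin

definition V :: "real \<Rightarrow> real" where "V y = deriv (deriv U) y / U y"

text \<open>\<open>V 0 = 0\<close> by the convention \<open>x / 0 = 0\<close>, which is harmless for integrals.
  Outside \<open>(-1, 1)\<close> nothing is known about \<open>U\<close>, so the ODE is solved with the truncation
  \<open>V_trunc\<close>, which is bounded and measurable on all of \<open>\<real>\<close>.\<close>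
definition V_trunc :: "real \<Rightarrow> real" where "V_trunc y = (if y \<in> {-1<..<1} then V y else 0)"

lemma U_has_deriv:
  assumes "x \<in> {-1<..<1}"
  shows "(U has_real_derivative deriv U x) (at x)"
proof -
  have "(deriv ^^ 0) U differentiable (at x)"
    using U_C2 assms unfolding Ck_on_def by (auto dest!: spec[of _ 0])
  then show ?thesis by (simp add: DERIV_deriv_iff_real_differentiable)
qed

lemma deriv_U_has_deriv:
  assumes "x \<in> {-1<..<1}"
  shows "(deriv U has_real_derivative deriv (deriv U) x) (at x)"
proof -
  have "(deriv ^^ 1) U differentiable (at x)"
    using U_C2 assms unfolding Ck_on_def by (auto dest!: spec[of _ 1])
  then show ?thesis by (simp add: DERIV_deriv_iff_real_differentiable)
qed

lemma isCont_deriv2_U: "x \<in> {-1<..<1} \<Longrightarrow> isCont (deriv (deriv U)) x"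
  using U_C2 unfolding Ck_on_def
  by (auto simp: numeral_2_eq_2 continuous_on_eq_continuous_at)

lemma isCont_U: "x \<in> {-1<..<1} \<Longrightarrow> isCont U x"
  and isCont_deriv_U: "x \<in> {-1<..<1} \<Longrightarrow> isCont (deriv U) x"
  using U_has_deriv deriv_U_has_deriv DERIV_isCont by blast+

lemma c0_mult_le_U: assumes "0 \<le> x" "x < 1" shows "c\<^sub>0 * x \<le> U x"
proof (cases "x = 0")
  case False
  then obtain z where z: "0 < z" "z < x" "U x - U 0 = (x - 0) * deriv U z"
    using MVT2[of 0 x U "deriv U"] U_has_deriv assms by force
  then show ?thesis
    using deriv_U_gt[of z] assms U_0 by (simp add: mult_left_mono mult.commute less_imp_le)
qed (simp add: U_0)

lemma U_le_c0_mult: assumes "-1 < x" "x \<le> 0" shows "U x \<le> c\<^sub>0 * x"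
proof (cases "x = 0")
  case False
  then obtain z where z: "x < z" "z < 0" "U 0 - U x = (0 - x) * deriv U z"
    using MVT2[of x 0 U "deriv U"] U_has_deriv assms by force
  then show ?thesis
    using deriv_U_gt[of z] assms U_0 by (simp add: mult_left_mono_neg mult.commute less_imp_le)
qed (simp add: U_0)

lemma U_pos: "0 < x \<Longrightarrow> x < 1 \<Longrightarrow> 0 < U x"
  using c0_mult_le_U[of x] c0_pos by (smt (verit) mult_pos_pos)

lemma U_neg: "-1 < x \<Longrightarrow> x < 0 \<Longrightarrow> U x < 0"
  using U_le_c0_mult[of x] c0_pos by (smt (verit) mult_pos_neg)

lemma U_nonzero: "x \<in> {-1<..<1} \<Longrightarrow> x \<noteq> 0 \<Longrightarrow> U x \<noteq> 0"
  using U_pos[of x] U_neg[of x] by (cases "0 < x") auto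

lemma abs_U_ge: "x \<in> {-1<..<1} \<Longrightarrow> c\<^sub>0 * \<bar>x\<bar> \<le> \<bar>U x\<bar>"
  using c0_mult_le_U[of x] U_le_c0_mult[of x] by (cases "0 \<le> x") auto

lemma deriv_U_0_pos: "0 < deriv U 0"
  using deriv_U_gt[of 0] c0_pos by simp

lemma V_trunc_bounded: "\<bar>V_trunc x\<bar> \<le> C"
  using V_bounds[of x] V_bounds[of 0] U_0 unfolding V_trunc_def V_def by auto

lemma V_trunc_measurable: "V_trunc \<in> borel_measurable lborel"
proof -
  let ?A = "{-1<..<1} - {0::real}"
  have "continuous_on ?A V"
    unfolding V_def[abs_def]
    by (intro continuous_at_imp_continuous_on ballI continuous_intros isCont_deriv2_U isCont_U U_nonzero)
       auto
  then have "(\<lambda>x. indicator ?A x *\<^sub>R V x) \<in> borel_measurable borel"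
    by (intro borel_measurable_continuous_on_indicator) auto
  moreover have "V_trunc = (\<lambda>x. indicator ?A x *\<^sub>R V x)"
    by (rule ext) (auto simp: V_trunc_def V_def U_0 indicator_def)
  ultimately show ?thesis by simp
qed

lemma interval_integrable_V_mult:
  fixes G :: "real \<Rightarrow> real"
  assumes "-1 \<le> a" "a \<le> b" "b \<le> 1" "continuous_on {a..b} G"
  shows "interval_lebesgue_integrable lborel a b (\<lambda>x. V x * G x)"
proof (rule interval_integrable_cong_open[OF assms(2)])
  have "interval_lebesgue_integrable lborel a b V_trunc"
    by (rule interval_integrable_bounded_measurable[OF assms(2) _ V_trunc_bounded])
       (intro borel_measurable_times borel_measurable_indicator V_trunc_measurable; simp)
  then show "interval_lebesgue_integrable lborel a b (\<lambda>x. V_trunc x * G x)"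
    by (rule interval_integrable_mult_continuous[OF assms(2) _ assms(4)])
  show "V_trunc x * G x = V x * G x" if "a < x" "x < b" for x
    using that assms by (simp add: V_trunc_def)
qed

section \<open>Positivity of the quadratic form on functions vanishing at 0\<close>

lemma indef_integral_deriv_U:
  assumes ab: "-1 < a" "a \<le> b" "b < 1"
  shows "indef_integral a b (deriv U) (deriv (deriv U))"
proof (rule indef_integral_of_derivative[OF ab(2)])
  have S: "x \<in> {-1<..<1}" if "x \<in> {a..b}" for x using that ab by auto
  show "continuous_on {a..b} (deriv (deriv U))"
    by (intro continuous_at_imp_continuous_on ballI isCont_deriv2_U S)
  show "(deriv U has_real_derivative deriv (deriv U) x) (at x within {a..b})" if "x \<in> {a..b}" for x
    using deriv_U_has_deriv[OF S[OF that]] by (rule has_field_derivative_at_within)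
qed

lemma indef_integral_inverse_U:
  assumes ab: "-1 < a" "a \<le> b" "b < 1" and nz: "\<And>x. x \<in> {a..b} \<Longrightarrow> U x \<noteq> 0"
  shows "indef_integral a b (\<lambda>x. 1 / U x) (\<lambda>x. - deriv U x / U x ^ 2)"
proof (rule indef_integral_of_derivative[OF ab(2)])
  have S: "x \<in> {-1<..<1}" if "x \<in> {a..b}" for x using that ab by auto
  show "continuous_on {a..b} (\<lambda>x. - deriv U x / U x ^ 2)"
    by (intro continuous_at_imp_continuous_on ballI continuous_intros isCont_U isCont_deriv_U S)
       (use nz in auto)
  show "((\<lambda>x. 1 / U x) has_real_derivative - deriv U x / U x ^ 2) (at x within {a..b})"
    if "x \<in> {a..b}" for x
    using DERIV_inverse_fun[OF has_field_derivative_at_within[OF U_has_deriv[OF S[OF that]]] nz[OF that]]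
    by (simp add: power2_eq_square inverse_eq_divide)
qed

text \<open>Picone's identity for the ground state \<open>U\<close> of \<open>-\<phi>'' + V \<phi>\<close>:
  \<open>f'\<^sup>2 + V f\<^sup>2 = (f' - U' f / U)\<^sup>2 + (U' f\<^sup>2 / U)'\<close> wherever \<open>U \<noteq> 0\<close>.\<close>
lemma picone_identity:
  fixes f f' :: "real \<Rightarrow> real" and a b :: real
  assumes ab: "-1 < a" "a \<le> b" "b < 1" and nz: "\<And>x. x \<in> {a..b} \<Longrightarrow> U x \<noteq> 0"
    and f: "indef_integral a b f f'" and f2: "interval_lebesgue_integrable lborel a b (\<lambda>x. f' x ^ 2)"
  shows "interval_lebesgue_integrable lborel a b (\<lambda>x. f' x ^ 2 + V x * f x ^ 2)"
    and "interval_lebesgue_integrable lborel a b (\<lambda>x. (f' x - deriv U x * f x / U x) ^ 2)"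
    and "(LBINT x=a..b. f' x ^ 2 + V x * f x ^ 2)
           = (LBINT x=a..b. (f' x - deriv U x * f x / U x) ^ 2)
             + deriv U b * f b ^ 2 / U b - deriv U a * f a ^ 2 / U a"
proof -
  note U1 = indef_integral_deriv_U[OF ab] and invU = indef_integral_inverse_U[OF ab nz]
  note IBP = indef_integral_by_parts[OF U1 indef_integral_mult[OF indef_integral_mult[OF f f] invU]]
  define r where "r x = deriv (deriv U) x * (f x * f x * (1 / U x))
    + deriv U x * ((f' x * f x + f x * f' x) * (1 / U x) + f x * f x * (- deriv U x / U x ^ 2))" for x
  have ir: "interval_lebesgue_integrable lborel a b r"
    using IBP(1) unfolding r_def .
  have Ir: "(LBINT x=a..b. r x) = deriv U b * f b ^ 2 / U b - deriv U a * f a ^ 2 / U a"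
    using IBP(2) unfolding r_def by (simp add: power2_eq_square)
  have iVf: "interval_lebesgue_integrable lborel a b (\<lambda>x. V x * f x ^ 2)"
    by (rule interval_integrable_V_mult)
       (use ab indef_integral_continuous[OF f] in \<open>auto intro!: continuous_intros\<close>)
  show ih: "interval_lebesgue_integrable lborel a b (\<lambda>x. f' x ^ 2 + V x * f x ^ 2)"
    using f2 iVf by (rule interval_lebesgue_integral_add(1))
  have pw: "(f' x - deriv U x * f x / U x) ^ 2 = (f' x ^ 2 + V x * f x ^ 2) - r x"
    if "a < x" "x < b" for x
    using nz[of x] that unfolding r_def V_def by (simp add: field_simps power2_eq_square)
  have ik: "interval_lebesgue_integrable lborel a b (\<lambda>x. (f' x ^ 2 + V x * f x ^ 2) - r x)"
    using ih ir by (rule interval_lebesgue_integral_diff(1))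
  show "interval_lebesgue_integrable lborel a b (\<lambda>x. (f' x - deriv U x * f x / U x) ^ 2)"
    by (rule interval_integrable_cong_open[OF ab(2) _ ik]) (use pw in auto)
  have "(LBINT x=a..b. (f' x - deriv U x * f x / U x) ^ 2) = (LBINT x=a..b. (f' x ^ 2 + V x * f x ^ 2) - r x)"
    by (rule interval_integral_cong_open[OF ab(2)]) (use pw in auto)
  also have "\<dots> = (LBINT x=a..b. f' x ^ 2 + V x * f x ^ 2) - (LBINT x=a..b. r x)"
    using ih ir by (rule interval_lebesgue_integral_diff(2))
  finally show "(LBINT x=a..b. f' x ^ 2 + V x * f x ^ 2)
      = (LBINT x=a..b. (f' x - deriv U x * f x / U x) ^ 2)
        + deriv U b * f b ^ 2 / U b - deriv U a * f a ^ 2 / U a"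
    using Ir by simp
qed

lemma boundary_term_tendsto_zero:
  assumes f: "indef_integral a b f f'" and f2: "interval_lebesgue_integrable lborel a b (\<lambda>x. f' x ^ 2)"
    and "0 \<in> {a..b}" "f 0 = 0"
  shows "((\<lambda>x. deriv U x * f x ^ 2 / U x) \<longlongrightarrow> 0) (at 0 within {a..b})"
proof (rule Lim_null_comparison)
  have "(deriv U \<longlongrightarrow> deriv U 0) (at 0 within {a..b})"
    using isCont_deriv_U[of 0] unfolding isCont_def by (rule tendsto_within_subset[OF _ subset_UNIV]) simp
  then have "((\<lambda>x. deriv U x * (f x ^ 2 / \<bar>x - 0\<bar>) / c\<^sub>0) \<longlongrightarrow> deriv U 0 * 0 / c\<^sub>0) (at 0 within {a..b})"
    using c0_pos by (intro tendsto_intros sq_div_dist_tendsto_zero[OF assms]) auto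
  then show "((\<lambda>x. deriv U x * (f x ^ 2 / \<bar>x\<bar>) / c\<^sub>0) \<longlongrightarrow> 0) (at 0 within {a..b})" by simp
  have bound: "norm (deriv U x * f x ^ 2 / U x) \<le> deriv U x * (f x ^ 2 / \<bar>x\<bar>) / c\<^sub>0"
    if x: "x \<in> {-1<..<1}" "x \<noteq> 0" for x
  proof -
    have pos: "0 < c\<^sub>0 * \<bar>x\<bar>" "0 < deriv U x" using c0_pos deriv_U_gt[OF x(1)] x by auto
    have "f x ^ 2 / \<bar>U x\<bar> \<le> f x ^ 2 / (c\<^sub>0 * \<bar>x\<bar>)"
      by (rule divide_left_mono) (use abs_U_ge[OF x(1)] pos in auto)
    then have "deriv U x * (f x ^ 2 / \<bar>U x\<bar>) \<le> deriv U x * (f x ^ 2 / (c\<^sub>0 * \<bar>x\<bar>))"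
      using pos by (intro mult_left_mono) auto
    then show ?thesis using pos by (simp add: abs_mult mult.commute)
  qed
  then show "eventually (\<lambda>x. norm (deriv U x * f x ^ 2 / U x) \<le> deriv U x * (f x ^ 2 / \<bar>x\<bar>) / c\<^sub>0)
      (at 0 within {a..b})"
    unfolding eventually_at by (intro exI[of _ 1]) (auto simp: dist_real_def abs_less_iff intro!: bound)
qed

lemma picone_lower_bound:
  assumes st: "-1 < s" "s \<le> t" "t < 1" "0 \<notin> {s..t}"
    and f: "indef_integral s t f f'" and f2: "interval_lebesgue_integrable lborel s t (\<lambda>x. f' x ^ 2)"
  shows "deriv U t * f t ^ 2 / U t - deriv U s * f s ^ 2 / U s \<le> (LBINT x=s..t. f' x ^ 2 + V x * f x ^ 2)"
proof -
  have "U x \<noteq> 0" if "x \<in> {s..t}" for x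
    using U_nonzero[of x] that st by auto
  note P = picone_identity[OF st(1-3) this f f2]
  have "0 \<le> (LBINT x=s..t. (f' x - deriv U x * f x / U x) ^ 2)"
    by (rule interval_integral_nonneg_open) (use st in auto)
  then show ?thesis using P(3) by linarith
qed

lemma boundary_term_at_ends_of_half:
  assumes ab: "-1 \<le> a" "a < b" "b \<le> 1" "a = 0 \<or> b = 0"
    and f: "indef_integral a b f f'" "f 0 = 0"
    and f2: "interval_lebesgue_integrable lborel a b (\<lambda>x. f' x ^ 2)" and "0 < e"
  shows "eventually (\<lambda>s. deriv U s * f s ^ 2 / U s \<le> e) (at_right a)"
    and "eventually (\<lambda>t. - e \<le> deriv U t * f t ^ 2 / U t) (at_left b)"
proof -
  define T where "T x = deriv U x * f x ^ 2 / U x" for x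
  have T_tendsto: "(T \<longlongrightarrow> 0) (at 0 within {a..b})"
    unfolding T_def by (rule boundary_term_tendsto_zero[OF f(1) f2]) (use ab f in auto)
  show "eventually (\<lambda>s. deriv U s * f s ^ 2 / U s \<le> e) (at_right a)"
  proof (cases "a = 0")
    case True
    then have "(T \<longlongrightarrow> 0) (at_right a)"
      using T_tendsto ab at_within_Icc_at_right[of a b] by simp
    from order_tendstoD(2)[OF this \<open>0 < e\<close>] show ?thesis by (rule eventually_mono) (simp add: T_def)
  next
    case False
    then have "b = 0" using ab by simp
    show ?thesis using eventually_at_right_real[OF ab(2)]
    proof eventually_elim
      case (elim s)
      then show ?case
        using U_neg[of s] deriv_U_gt[of s] c0_pos \<open>b = 0\<close> ab \<open>0 < e\<close>
        by (auto simp: divide_le_0_iff intro: order_trans[of _ 0])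
    qed
  qed
  show "eventually (\<lambda>t. - e \<le> deriv U t * f t ^ 2 / U t) (at_left b)"
  proof (cases "b = 0")
    case True
    then have "(T \<longlongrightarrow> 0) (at_left b)"
      using T_tendsto ab at_within_Icc_at_left[of a b] by simp
    from order_tendstoD(1)[OF this, of "- e"] \<open>0 < e\<close> show ?thesis by (auto simp: T_def elim: eventually_mono)
  next
    case False
    then have "a = 0" using ab by simp
    show ?thesis using eventually_at_left_real[OF ab(2)]
    proof eventually_elim
      case (elim t)
      then show ?case
        using U_pos[of t] deriv_U_gt[of t] c0_pos \<open>a = 0\<close> ab \<open>0 < e\<close>
        by (auto intro: order_trans[of _ 0])
    qed
  qed
qed

lemma form_nonneg_on_half:
  assumes ab: "-1 \<le> a" "a < b" "b \<le> 1" "a = 0 \<or> b = 0"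
    and f: "indef_integral a b f f'" "f a = 0" "f b = 0"
    and f2: "interval_lebesgue_integrable lborel a b (\<lambda>x. f' x ^ 2)"
  shows "interval_lebesgue_integrable lborel a b (\<lambda>x. f' x ^ 2 + V x * f x ^ 2)"
    and "0 \<le> (LBINT x=a..b. f' x ^ 2 + V x * f x ^ 2)"
proof -
  define h where "h x = f' x ^ 2 + V x * f x ^ 2" for x
  show ih: "interval_lebesgue_integrable lborel a b h"
    unfolding h_def
    by (intro interval_lebesgue_integral_add(1) f2 interval_integrable_V_mult)
       (use ab indef_integral_continuous[OF f(1)] in \<open>auto intro!: continuous_intros\<close>)
  define H where "H x = (LBINT t=a..x. h t)" for x :: real
  have cH: "continuous_on {a..b} H"
    unfolding H_def using ab ih by (intro interval_integral_continuous_upper) auto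
  have "f 0 = 0" using ab f by auto
  have "H a \<le> H b"
  proof (rule le_by_increment_bound[OF ab(2) cH])
    fix s t assume st: "a < s" "s \<le> t" "t < b"
    then have sub: "a \<le> s" "s \<le> t" "t \<le> b" by auto
    have "H s + (LBINT x=s..t. h x) = H t"
      unfolding H_def
      by (rule interval_integral_sum)
         (use interval_integrable_subinterval[of a a t b h] ih st in \<open>auto simp: min_def max_def\<close>)
    moreover have "deriv U t * f t ^ 2 / U t - deriv U s * f s ^ 2 / U s \<le> (LBINT x=s..t. h x)"
      unfolding h_def
      by (rule picone_lower_bound[OF _ st(2) _ _ indef_integral_subinterval[OF f(1) sub]
            interval_integrable_subinterval[OF sub f2]])
         (use st ab in auto)
    ultimately show "deriv U t * f t ^ 2 / U t - deriv U s * f s ^ 2 / U s \<le> H t - H s"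
      by linarith
  qed (use boundary_term_at_ends_of_half[OF ab f(1) \<open>f 0 = 0\<close> f2] in auto)
  then show "0 \<le> (LBINT x=a..b. f' x ^ 2 + V x * f x ^ 2)"
    by (simp add: H_def h_def)
qed
section \<open>Solutions of the ODE on the two halves\<close>

definition ode_solution :: "real \<Rightarrow> real \<Rightarrow> real \<Rightarrow> (real \<Rightarrow> real) \<Rightarrow> (real \<Rightarrow> real) \<Rightarrow> bool" where
  "ode_solution lam a b y p \<longleftrightarrow>
     indef_integral a b y p \<and> indef_integral a b p (\<lambda>x. (V_trunc x - lam) * y x)"

lemma half_dirichlet_solution_zero:
  fixes B p :: "real \<Rightarrow> real"
  assumes lam: "lam < 0" and ab: "-1 \<le> a" "a < b" "b \<le> 1" "a = 0 \<or> b = 0"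
    and sol: "ode_solution lam a b B p" and "B a = 0" "B b = 0" "x \<in> {a..b}"
  shows "B x = 0"
proof -
  have B: "indef_integral a b B p" and p: "indef_integral a b p (\<lambda>x. (V_trunc x - lam) * B x)"
    using sol by (simp_all add: ode_solution_def)
  have cB: "continuous_on {a..b} B" and cp: "continuous_on {a..b} p"
    using indef_integral_continuous B p by blast+
  have p2: "interval_lebesgue_integrable lborel a b (\<lambda>x. p x ^ 2)"
    using ab cp by (intro interval_integrable_continuous_on continuous_intros) auto
  have B2: "interval_lebesgue_integrable lborel a b (\<lambda>x. lam * B x ^ 2)"
    using ab cB by (intro interval_integrable_continuous_on continuous_intros) auto
  note Q = form_nonneg_on_half[OF ab B \<open>B a = 0\<close> \<open>B b = 0\<close> p2]
  have integrand: "(V_trunc x - lam) * B x * B x + p x * p x = (p x ^ 2 + V x * B x ^ 2) - lam * B x ^ 2"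
    if "a < x" "x < b" for x
    using that ab by (simp add: V_trunc_def power2_eq_square algebra_simps)
  have "0 = (LBINT x=a..b. (V_trunc x - lam) * B x * B x + p x * p x)"
    using indef_integral_by_parts(2)[OF p B] \<open>B a = 0\<close> \<open>B b = 0\<close> by simp
  also have "\<dots> = (LBINT x=a..b. (p x ^ 2 + V x * B x ^ 2) - lam * B x ^ 2)"
    by (rule interval_integral_cong_open[OF less_imp_le[OF ab(2)] integrand])
  also have "\<dots> = (LBINT x=a..b. p x ^ 2 + V x * B x ^ 2) - lam * (LBINT x=a..b. B x ^ 2)"
    using interval_lebesgue_integral_diff(2)[OF Q(1) B2] by simp
  finally have "0 = (LBINT x=a..b. p x ^ 2 + V x * B x ^ 2) - lam * (LBINT x=a..b. B x ^ 2)" .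
  then show ?thesis
    by (intro zero_if_energy_nonpos[OF lam ab(2) cB Q(2) _ \<open>x \<in> {a..b}\<close>]) linarith
qed

lemma shooting_nondegenerate:
  fixes B p :: "real \<Rightarrow> real"
  assumes lam: "lam < 0" and ab: "-1 \<le> a" "a < b" "b \<le> 1" "a = 0 \<or> b = 0"
    and sol: "ode_solution lam a b B p" and "B a = 0" "p a = 1"
  shows "B b \<noteq> 0"
proof
  assume "B b = 0"
  have B: "indef_integral a b B p" and p: "indef_integral a b p (\<lambda>x. (V_trunc x - lam) * B x)"
    using sol by (simp_all add: ode_solution_def)
  have B0: "B x = 0" if "x \<in> {a..b}" for x
    using half_dirichlet_solution_zero[OF lam ab sol \<open>B a = 0\<close> \<open>B b = 0\<close> that] .
  have p1: "p x = 1" if "x \<in> {a..b}" for x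
  proof -
    have "(LBINT t=a..x. (V_trunc t - lam) * B t) = (LBINT t=a..x. 0)"
      by (rule interval_integral_cong_open) (use that B0 in auto)
    then show ?thesis using indef_integralD(3)[OF p that] \<open>p a = 1\<close> by simp
  qed
  have "(LBINT t=a..b. p t) = (LBINT t=a..b. 1)"
    by (rule interval_integral_cong_open) (use p1 ab in auto)
  then have "B b = b - a" using indef_integralD(3)[OF B, of b] \<open>B a = 0\<close> ab by simp
  then show False using \<open>B b = 0\<close> ab by simp
qed

lemma ode_solution_exists:
  assumes "a \<le> b"
  obtains y p where "ode_solution lam a b y p" "y a = y0" "p a = p0"
proof -
  have "(\<lambda>x. V_trunc x - lam) \<in> borel_measurable lborel"
    using V_trunc_measurable by measurable
  moreover have "\<bar>V_trunc x - lam\<bar> \<le> C + \<bar>lam\<bar>" for x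
    using V_trunc_bounded[of x] by linarith
  ultimately show ?thesis
    using linear_ode_exists[OF assms, of "\<lambda>x. V_trunc x - lam" "C + \<bar>lam\<bar>" y0 p0] that
    unfolding ode_solution_def by blast
qed

lemma ode_solution_diff:
  assumes "ode_solution lam a b y p" "ode_solution lam a b z r"
  shows "ode_solution lam a b (\<lambda>x. y x - z x) (\<lambda>x. p x - r x)"
  using assms unfolding ode_solution_def
  by (auto dest: indef_integral_diff intro: indef_integral_cong_deriv simp: algebra_simps)

lemma ode_solution_cmult:
  assumes "ode_solution lam a b y p"
  shows "ode_solution lam a b (\<lambda>x. c * y x) (\<lambda>x. c * p x)"
  using assms unfolding ode_solution_def
  by (auto dest: indef_integral_cmult[of _ _ _ _ c] intro: indef_integral_cong_deriv simp: algebra_simps)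


lemma boundary_solutions:
  assumes lam: "lam < 0"
  obtains R pR L pL where
    "ode_solution lam 0 1 R pR" "R 0 = 1" "R 1 = 0"
    "ode_solution lam (-1) 0 L pL" "L 0 = 1" "L (-1) = 0"
proof -
  obtain A pA where A: "ode_solution lam 0 1 A pA" "A 0 = 1" "pA 0 = 0"
    by (rule ode_solution_exists[of 0 1 lam 1 0]) auto
  obtain B pB where B: "ode_solution lam 0 1 B pB" "B 0 = 0" "pB 0 = 1"
    by (rule ode_solution_exists[of 0 1 lam 0 1]) auto
  have "B 1 \<noteq> 0" by (rule shooting_nondegenerate[OF lam _ _ _ _ B]) auto
  obtain L0 pL0 where L0: "ode_solution lam (-1) 0 L0 pL0" "L0 (-1) = 0" "pL0 (-1) = 1"
    by (rule ode_solution_exists[of "-1" 0 lam 0 1]) auto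
  have "L0 0 \<noteq> 0" by (rule shooting_nondegenerate[OF lam _ _ _ _ L0]) auto
  show ?thesis
  proof (rule that)
    show "ode_solution lam 0 1 (\<lambda>x. A x - A 1 / B 1 * B x) (\<lambda>x. pA x - A 1 / B 1 * pB x)"
      by (intro ode_solution_diff ode_solution_cmult A B)
    show "ode_solution lam (-1) 0 (\<lambda>x. 1 / L0 0 * L0 x) (\<lambda>x. 1 / L0 0 * pL0 x)"
      by (intro ode_solution_cmult L0)
  qed (use A B L0 \<open>B 1 \<noteq> 0\<close> \<open>L0 0 \<noteq> 0\<close> in auto)
qed

lemma ode_solution_weak_form:
  assumes sol: "ode_solution lam a b y p" and ab: "-1 \<le> a" "b \<le> 1"
    and \<phi>: "indef_integral a b \<phi> \<phi>'"
  shows "interval_lebesgue_integrable lborel a b (\<lambda>x. p x * \<phi>' x + V x * y x * \<phi> x - lam * y x * \<phi> x)"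
    and "(LBINT x=a..b. p x * \<phi>' x + V x * y x * \<phi> x - lam * y x * \<phi> x) = p b * \<phi> b - p a * \<phi> a"
proof -
  have p: "indef_integral a b p (\<lambda>x. (V_trunc x - lam) * y x)"
    using sol by (simp add: ode_solution_def)
  have ab': "a \<le> b" by (rule indef_integralD(1)[OF p])
  have eq: "(V_trunc x - lam) * y x * \<phi> x + p x * \<phi>' x = p x * \<phi>' x + V x * y x * \<phi> x - lam * y x * \<phi> x"
    if "a < x" "x < b" for x
    using that ab by (simp add: V_trunc_def algebra_simps)
  note IBP = indef_integral_by_parts[OF p \<phi>]
  show "interval_lebesgue_integrable lborel a b (\<lambda>x. p x * \<phi>' x + V x * y x * \<phi> x - lam * y x * \<phi> x)"
    by (rule interval_integrable_cong_open[OF ab' eq IBP(1)])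
  show "(LBINT x=a..b. p x * \<phi>' x + V x * y x * \<phi> x - lam * y x * \<phi> x) = p b * \<phi> b - p a * \<phi> a"
    using interval_integral_cong_open[OF ab' eq] IBP(2) by simp
qed

lemma weak_form_of_glued_solutions:
  assumes L: "ode_solution lam (-1) 0 L pL" and R: "ode_solution lam 0 1 R pR"
    and left: "\<And>x. -1 < x \<Longrightarrow> x < 0 \<Longrightarrow> \<Phi> x = L x \<and> \<Phi>' x = pL x"
    and right: "\<And>x. 0 < x \<Longrightarrow> x < 1 \<Longrightarrow> \<Phi> x = R x \<and> \<Phi>' x = pR x"
    and \<phi>: "H10 \<phi> \<phi>'"
  shows "(LBINT y=-1..1. \<Phi>' y * \<phi>' y + deriv (deriv U) y / U y * \<Phi> y * \<phi> y - lam * \<Phi> y * \<phi> y)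
       = (pL 0 - pR 0) * \<phi> 0"
proof -
  define I where "I y = \<Phi>' y * \<phi>' y + deriv (deriv U) y / U y * \<Phi> y * \<phi> y - lam * \<Phi> y * \<phi> y" for y
  note \<phi>' = H10_imp_indef_integral[OF \<phi>]
  note WL = ode_solution_weak_form[OF L _ _ indef_integral_subinterval[OF \<phi>'(1), of "-1" 0]]
  note WR = ode_solution_weak_form[OF R _ _ indef_integral_subinterval[OF \<phi>'(1), of 0 1]]
  have eqL: "pL y * \<phi>' y + V y * L y * \<phi> y - lam * L y * \<phi> y = I y" if "-1 < y" "y < 0" for y
    using left[OF that] by (simp add: I_def V_def)
  have eqR: "pR y * \<phi>' y + V y * R y * \<phi> y - lam * R y * \<phi> y = I y" if "0 < y" "y < 1" for y
    using right[OF that] by (simp add: I_def V_def)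
  have iI: "interval_lebesgue_integrable lborel (-1::real) (1::real) I"
    by (rule interval_integrable_join[OF _ _ interval_integrable_cong_open[OF _ eqL WL(1)]
          interval_integrable_cong_open[OF _ eqR WR(1)]]) auto
  have "(LBINT y=(-1::real)..(0::real). I y) + (LBINT y=(0::real)..(1::real). I y) = (LBINT y=(-1::real)..(1::real). I y)"
    by (rule interval_integral_sum) (use iI in \<open>simp add: min_def max_def\<close>)
  moreover have "(LBINT y=(-1::real)..(0::real). I y) = pL 0 * \<phi> 0"
    using interval_integral_cong_open[of "-1" 0, OF _ eqL] WL(2) \<phi>'(2) by simp
  moreover have "(LBINT y=(0::real)..(1::real). I y) = - pR 0 * \<phi> 0"
    using interval_integral_cong_open[of 0 1, OF _ eqR] WR(2) \<phi>'(3) by simp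
  ultimately show ?thesis
    unfolding I_def[symmetric] interval_integral_minus_one_one by (simp add: algebra_simps)
qed

lemma weak_solution_exists:
  assumes lam: "lam < 0"
  shows "\<exists>m \<Phi> \<Phi>'. weak_sol U m lam \<Phi> \<Phi>' \<and> \<Phi> 0 = 1"
proof -
  obtain R pR L pL where
    R: "ode_solution lam 0 1 R pR" "R 0 = 1" "R 1 = 0" and
    L: "ode_solution lam (-1) 0 L pL" "L 0 = 1" "L (-1) = 0"
    using boundary_solutions[OF lam] by blast
  define \<Phi> where "\<Phi> x = (if x \<le> 0 then L x else R x)" for x
  define \<Phi>' where "\<Phi>' x = indicator {-1..0} x * pL x + indicator {0<..1} x * pR x" for x
  have H: "H10 \<Phi> \<Phi>'"
    unfolding \<Phi>_def[abs_def] \<Phi>'_def[abs_def]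
    using L R by (intro H10_join) (auto simp: ode_solution_def intro: indef_integral_continuous)
  have left: "\<Phi> x = L x \<and> \<Phi>' x = pL x" if "-1 < x" "x < 0" for x
    using that by (simp add: \<Phi>_def \<Phi>'_def)
  have right: "\<Phi> x = R x \<and> \<Phi>' x = pR x" if "0 < x" "x < 1" for x
    using that by (simp add: \<Phi>_def \<Phi>'_def)
  have "weak_sol U (deriv U 0 * (pL 0 - pR 0)) lam \<Phi> \<Phi>'"
    unfolding weak_sol_def
    using H weak_form_of_glued_solutions[OF L(1) R(1) left right] L(2) deriv_U_0_pos
    by (simp add: \<Phi>_def)
  moreover have "\<Phi> 0 = 1" by (simp add: \<Phi>_def L(2))
  ultimately show ?thesis by blast
qed
section \<open>Uniqueness of the parameter\<close>

definition energy :: "(real \<Rightarrow> real) \<Rightarrow> (real \<Rightarrow> real) \<Rightarrow> (real \<Rightarrow> real) \<Rightarrow> (real \<Rightarrow> real) \<Rightarrow> real" where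
  "energy f f' g g' = (LBINT y=(-1::real)..(1::real). f' y * g' y + V y * f y * g y)"

lemma H10_products_integrable:
  assumes f: "H10 f f'" and g: "H10 g g'"
  shows "interval_lebesgue_integrable lborel (-1::real) (1::real) (\<lambda>y. f' y * g' y)"
    and "interval_lebesgue_integrable lborel (-1::real) (1::real) (\<lambda>y. V y * f y * g y)"
    and "interval_lebesgue_integrable lborel (-1::real) (1::real) (\<lambda>y. f y * g y)"
proof -
  note F = H10_imp_indef_integral[OF f] and G = H10_imp_indef_integral[OF g]
  have cf: "continuous_on {-1..1} f" and cg: "continuous_on {-1..1} g"
    using F(1) G(1) by (auto intro: indef_integral_continuous)
  have "integrable lborel (\<lambda>x. indicator {-1..1} x * (f' x * g' x))"
  proof (rule Bochner_Integration.integrable_bound)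
    have "interval_lebesgue_integrable lborel (-1::real) (1::real) (\<lambda>x. f' x ^ 2 + g' x ^ 2)"
      using F(4) G(4) by (rule interval_lebesgue_integral_add(1))
    then show "integrable lborel (\<lambda>x. indicator {-1..1} x * (f' x ^ 2 + g' x ^ 2))"
      by (simp add: interval_integrable_iff_indicator)
    show "(\<lambda>x. indicator {-1..1} x * (f' x * g' x)) \<in> borel_measurable lborel"
      using F(5) G(5) by measurable
    have "\<bar>u * v\<bar> \<le> u ^ 2 + v ^ 2" for u v :: real
    proof -
      have "0 \<le> (\<bar>u\<bar> - \<bar>v\<bar>)\<^sup>2" by simp
      then have "2 * (\<bar>u\<bar> * \<bar>v\<bar>) \<le> u ^ 2 + v ^ 2"
        by (simp add: power2_eq_square algebra_simps abs_mult_self_eq)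
      moreover have "0 \<le> \<bar>u\<bar> * \<bar>v\<bar>" by simp
      ultimately show ?thesis unfolding abs_mult by linarith
    qed
    then show "AE x in lborel. norm (indicator {-1..1} x * (f' x * g' x))
        \<le> norm (indicator {-1..1} x * (f' x ^ 2 + g' x ^ 2))"
      by (intro AE_I2) (auto simp: indicator_def)
  qed
  then show "interval_lebesgue_integrable lborel (-1::real) (1::real) (\<lambda>y. f' y * g' y)"
    by (simp add: interval_integrable_iff_indicator)
  have "interval_lebesgue_integrable lborel (-1::real) (1::real) (\<lambda>y. V y * (f y * g y))"
    by (rule interval_integrable_V_mult) (use cf cg in \<open>auto intro!: continuous_intros\<close>)
  then show "interval_lebesgue_integrable lborel (-1::real) (1::real) (\<lambda>y. V y * f y * g y)"
    by (simp add: mult.assoc)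
  show "interval_lebesgue_integrable lborel (-1::real) (1::real) (\<lambda>y. f y * g y)"
    by (rule interval_integrable_continuous_on) (use cf cg in \<open>auto intro!: continuous_intros\<close>)
qed

lemma weak_form_integral_eq:
  assumes "H10 f f'" "H10 g g'"
  shows "(LBINT y=-1..1. f' y * g' y + deriv (deriv U) y / U y * f y * g y - lam * f y * g y)
       = energy f f' g g' - lam * (LBINT y=(-1::real)..(1::real). f y * g y)"
proof -
  note I = H10_products_integrable[OF assms]
  have "(LBINT y=-1..1. f' y * g' y + deriv (deriv U) y / U y * f y * g y - lam * f y * g y)
      = (LBINT y=(-1::real)..(1::real). (f' y * g' y + V y * f y * g y) - lam * (f y * g y))"
    unfolding interval_integral_minus_one_one by (simp add: V_def mult.assoc)
  also have "\<dots> = energy f f' g g' - (LBINT y=(-1::real)..(1::real). lam * (f y * g y))"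
    unfolding energy_def
    by (rule interval_lebesgue_integral_diff(2)[OF interval_lebesgue_integral_add(1)[OF I(1,2)]])
       (use I(3) in simp)
  finally show ?thesis by simp
qed

lemma energy_commute: "energy f f' g g' = energy g g' f f'"
  unfolding energy_def by (simp add: mult_ac)

lemma energy_diff_left:
  assumes "H10 f f'" "H10 g g'" "H10 h h'"
  shows "energy (\<lambda>x. f x - g x) (\<lambda>x. f' x - g' x) h h' = energy f f' h h' - energy g g' h h'"
proof -
  note I = H10_products_integrable[OF assms(1,3)] and J = H10_products_integrable[OF assms(2,3)]
  have "energy f f' h h' - energy g g' h h'
      = (LBINT y=(-1::real)..(1::real). (f' y * h' y + V y * f y * h y) - (g' y * h' y + V y * g y * h y))"
    unfolding energy_def
    by (rule interval_lebesgue_integral_diff(2)[symmetric])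
       (intro interval_lebesgue_integral_add(1) I J)+
  then show ?thesis unfolding energy_def by (simp add: algebra_simps)
qed

lemma energy_nonneg:
  assumes "H10 f f'" "f 0 = 0"
  shows "0 \<le> energy f f' f f'"
proof -
  note f = H10_imp_indef_integral[OF assms(1)]
  note L = form_nonneg_on_half[of "-1" 0, OF _ _ _ _ indef_integral_subinterval[OF f(1)] f(2) assms(2)
      interval_integrable_subinterval[OF _ _ _ f(4)]]
  note R = form_nonneg_on_half[of 0 1, OF _ _ _ _ indef_integral_subinterval[OF f(1)] assms(2) f(3)
      interval_integrable_subinterval[OF _ _ _ f(4)]]
  have "interval_lebesgue_integrable lborel (-1::real) (1::real) (\<lambda>x. f' x ^ 2 + V x * f x ^ 2)"
    by (rule interval_integrable_join[OF _ _ L(1) R(1)]) auto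
  then have "(LBINT x=(-1::real)..(0::real). f' x ^ 2 + V x * f x ^ 2)
      + (LBINT x=(0::real)..(1::real). f' x ^ 2 + V x * f x ^ 2)
      = (LBINT x=(-1::real)..(1::real). f' x ^ 2 + V x * f x ^ 2)"
    by (intro interval_integral_sum) (simp add: min_def max_def)
  moreover have "energy f f' f f' = (LBINT x=(-1::real)..(1::real). f' x ^ 2 + V x * f x ^ 2)"
    unfolding energy_def by (simp add: power2_eq_square mult.assoc)
  ultimately show ?thesis using L(2) R(2) by simp
qed

lemma H10_diff:
  assumes f: "H10 f f'" and g: "H10 g g'"
  shows "H10 (\<lambda>x. f x - g x) (\<lambda>x. f' x - g' x)"
proof (rule indef_integral_imp_H10)
  note F = H10_imp_indef_integral[OF f] and G = H10_imp_indef_integral[OF g]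
  show "indef_integral (-1) 1 (\<lambda>x. f x - g x) (\<lambda>x. f' x - g' x)"
    by (rule indef_integral_diff[OF F(1) G(1)])
  show "f (-1) - g (-1) = 0" "f 1 - g 1 = 0" using F G by auto
  show "(\<lambda>x. f' x - g' x) \<in> borel_measurable lborel" using F(5) G(5) by measurable
  have "interval_lebesgue_integrable lborel (-1::real) (1::real) (\<lambda>x. (f' x ^ 2 + g' x ^ 2) - 2 * (f' x * g' x))"
    using F(4) G(4) H10_products_integrable(1)[OF f g]
    by (intro interval_lebesgue_integral_diff(1) interval_lebesgue_integral_add(1)) auto
  then show "interval_lebesgue_integrable lborel (-1::real) (1::real) (\<lambda>x. (f' x - g' x) ^ 2)"
    by (simp add: power2_eq_square algebra_simps)
qed

lemma weak_solD:
  assumes "weak_sol U m lam \<Phi> \<Phi>'" "H10 \<phi> \<phi>'"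
  shows "energy \<Phi> \<Phi>' \<phi> \<phi>' - lam * (LBINT y=(-1::real)..(1::real). \<Phi> y * \<phi> y) = m * \<Phi> 0 * \<phi> 0 / deriv U 0"
  using assms weak_form_integral_eq[of \<Phi> \<Phi>' \<phi> \<phi>' lam] unfolding weak_sol_def by auto

lemma weak_sol_zero_if_zero_at_0:
  assumes lam: "lam < 0" and \<Psi>: "weak_sol U m lam \<Psi> \<Psi>'" and "\<Psi> 0 = 0" and x: "x \<in> {-1..1}"
  shows "\<Psi> x = 0"
proof -
  have H: "H10 \<Psi> \<Psi>'" using \<Psi> by (simp add: weak_sol_def)
  have "energy \<Psi> \<Psi>' \<Psi> \<Psi>' - lam * (LBINT y=(-1::real)..(1::real). \<Psi> y ^ 2) = 0"
    using weak_solD[OF \<Psi> H] \<open>\<Psi> 0 = 0\<close> by (simp add: power2_eq_square)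
  then show ?thesis
    by (intro zero_if_energy_nonpos[OF lam _ indef_integral_continuous[OF H10_imp_indef_integral(1)[OF H]]
          energy_nonneg[OF H \<open>\<Psi> 0 = 0\<close>] _ x]) auto
qed

lemma weak_sol_parameter_unique:
  assumes lam: "lam < 0" and \<Psi>: "weak_sol U m lam \<Psi> \<Psi>'" "\<exists>x\<in>{-1..1}. \<Psi> x \<noteq> 0"
    and \<Phi>: "weak_sol U m' lam \<Phi> \<Phi>'" "\<Phi> 0 = 1"
  shows "m = m'"
proof -
  have "\<Psi> 0 \<noteq> 0" using weak_sol_zero_if_zero_at_0[OF lam \<Psi>(1)] \<Psi>(2) by blast
  have H: "H10 \<Psi> \<Psi>'" "H10 \<Phi> \<Phi>'" using \<Psi>(1) \<Phi>(1) by (simp_all add: weak_sol_def)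
  have "(LBINT y=(-1::real)..(1::real). \<Phi> y * \<Psi> y) = (LBINT y=(-1::real)..(1::real). \<Psi> y * \<Phi> y)"
    by (simp add: mult.commute)
  then have "energy \<Psi> \<Psi>' \<Phi> \<Phi>' - lam * (LBINT y=(-1::real)..(1::real). \<Psi> y * \<Phi> y)
      = m' * \<Phi> 0 * \<Psi> 0 / deriv U 0"
    using weak_solD[OF \<Phi>(1) H(1)] energy_commute[of \<Psi> \<Psi>' \<Phi> \<Phi>'] by simp
  then have "m * \<Psi> 0 * \<Phi> 0 / deriv U 0 = m' * \<Phi> 0 * \<Psi> 0 / deriv U 0"
    using weak_solD[OF \<Psi>(1) H(2)] by simp
  then show ?thesis using \<open>\<Psi> 0 \<noteq> 0\<close> \<Phi>(2) deriv_U_0_pos by simp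
qed

section \<open>The function \<open>M\<close> and its derivative\<close>

text \<open>For \<open>lam \<ge> 0\<close> the choice below is over a possibly empty set, so \<open>M lam\<close> is unspecified there.\<close>
definition M :: "real \<Rightarrow> real" where
  "M lam = (SOME m. \<exists>\<Phi> \<Phi>'. weak_sol U m lam \<Phi> \<Phi>' \<and> \<Phi> 0 = 1)"

lemma M_spec: "lam < 0 \<Longrightarrow> \<exists>\<Phi> \<Phi>'. weak_sol U (M lam) lam \<Phi> \<Phi>' \<and> \<Phi> 0 = 1"
  unfolding M_def by (rule someI_ex) (rule weak_solution_exists)

lemma has_nontrivial_sol_iff:
  assumes "lam < 0"
  shows "has_nontrivial_sol U m lam \<longleftrightarrow> m = M lam"
proof -
  obtain \<Phi> \<Phi>' where \<Phi>: "weak_sol U (M lam) lam \<Phi> \<Phi>'" "\<Phi> 0 = 1" using M_spec[OF assms] by blast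
  show ?thesis
  proof
    assume "has_nontrivial_sol U m lam"
    then obtain \<Psi> \<Psi>' where "weak_sol U m lam \<Psi> \<Psi>'" "\<exists>x\<in>{-1..1}. \<Psi> x \<noteq> 0"
      unfolding has_nontrivial_sol_def by blast
    then show "m = M lam" by (rule weak_sol_parameter_unique[OF assms _ _ \<Phi>])
  next
    assume "m = M lam"
    then show "has_nontrivial_sol U m lam"
      unfolding has_nontrivial_sol_def using \<Phi> by (intro exI[of _ \<Phi>] exI[of _ \<Phi>'] conjI bexI[of _ 0]) auto
  qed
qed

lemma integral_sq_pos:
  assumes "H10 f f'" "f 0 = 1"
  shows "0 < (LBINT y=(-1::real)..(1::real). f y * f y)"
proof -
  have cf: "continuous_on {-1..1} f"
    using indef_integral_continuous[OF H10_imp_indef_integral(1)[OF assms(1)]] .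
  have "0 \<le> (LBINT y=(-1::real)..(1::real). f y ^ 2)" by (rule interval_integral_nonneg_open) auto
  moreover have "(LBINT y=(-1::real)..(1::real). f y ^ 2) \<noteq> 0"
    using continuous_zero_if_sq_interval_integral_zero[OF _ cf, of 0] assms(2) by auto
  ultimately show ?thesis by (simp add: power2_eq_square)
qed

text \<open>Testing each of two normalised solutions against the other; the energies cancel by symmetry.\<close>
lemma weak_sol_parameter_difference:
  assumes l: "weak_sol U ml l \<Phi>l \<Phi>l'" "\<Phi>l 0 = 1" and \<mu>: "weak_sol U m\<mu> \<mu> \<Phi>\<mu> \<Phi>\<mu>'" "\<Phi>\<mu> 0 = 1"
  shows "ml - m\<mu> = deriv U 0 * ((\<mu> - l) * (LBINT y=(-1::real)..(1::real). \<Phi>l y * \<Phi>\<mu> y))"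
proof -
  have H: "H10 \<Phi>l \<Phi>l'" "H10 \<Phi>\<mu> \<Phi>\<mu>'" using l(1) \<mu>(1) by (simp_all add: weak_sol_def)
  have "(LBINT y=(-1::real)..(1::real). \<Phi>\<mu> y * \<Phi>l y) = (LBINT y=(-1::real)..(1::real). \<Phi>l y * \<Phi>\<mu> y)"
    by (simp add: mult.commute)
  then have "ml / deriv U 0 - m\<mu> / deriv U 0 = (\<mu> - l) * (LBINT y=(-1::real)..(1::real). \<Phi>l y * \<Phi>\<mu> y)"
    using weak_solD[OF l(1) H(2)] weak_solD[OF \<mu>(1) H(1)] energy_commute[of \<Phi>l \<Phi>l' \<Phi>\<mu> \<Phi>\<mu>'] l(2) \<mu>(2)
    by (simp add: algebra_simps)
  then show ?thesis using deriv_U_0_pos by (simp add: field_simps)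
qed

text \<open>Testing both solutions against their difference \<open>D\<close>, which vanishes at 0, so that
  \<open>energy D D \<ge> 0\<close>.\<close>
lemma weak_sol_difference_estimate:
  assumes l: "weak_sol U ml l \<Phi>l \<Phi>l'" "\<Phi>l 0 = 1" and \<mu>: "weak_sol U m\<mu> \<mu> \<Phi>\<mu> \<Phi>\<mu>'" "\<Phi>\<mu> 0 = 1"
  defines "D \<equiv> \<lambda>x. \<Phi>\<mu> x - \<Phi>l x"
  shows "- \<mu> * (LBINT y=(-1::real)..(1::real). D y * D y) \<le> (\<mu> - l) * (LBINT y=(-1::real)..(1::real). \<Phi>l y * D y)"
proof -
  have H: "H10 \<Phi>l \<Phi>l'" "H10 \<Phi>\<mu> \<Phi>\<mu>'" using l(1) \<mu>(1) by (simp_all add: weak_sol_def)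
  define D' where "D' x = \<Phi>\<mu>' x - \<Phi>l' x" for x
  have HD: "H10 D D'" unfolding D_def D'_def by (rule H10_diff[OF H(2,1)])
  have "D 0 = 0" using l(2) \<mu>(2) by (simp add: D_def)
  let ?I = "\<lambda>f. (LBINT y=(-1::real)..(1::real). f y)"
  have el: "energy \<Phi>l \<Phi>l' D D' = l * ?I (\<lambda>y. \<Phi>l y * D y)"
    using weak_solD[OF l(1) HD] \<open>D 0 = 0\<close> by simp
  have em: "energy \<Phi>\<mu> \<Phi>\<mu>' D D' = \<mu> * ?I (\<lambda>y. \<Phi>\<mu> y * D y)"
    using weak_solD[OF \<mu>(1) HD] \<open>D 0 = 0\<close> by simp
  have "energy D D' D D' = energy \<Phi>\<mu> \<Phi>\<mu>' D D' - energy \<Phi>l \<Phi>l' D D'"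
    unfolding D_def D'_def by (rule energy_diff_left[OF H(2,1) HD[unfolded D_def D'_def]])
  moreover have "?I (\<lambda>y. \<Phi>\<mu> y * D y) = ?I (\<lambda>y. \<Phi>l y * D y) + ?I (\<lambda>y. D y * D y)"
  proof -
    have "?I (\<lambda>y. \<Phi>\<mu> y * D y) = ?I (\<lambda>y. \<Phi>l y * D y + D y * D y)"
      by (simp add: D_def algebra_simps)
    also have "\<dots> = ?I (\<lambda>y. \<Phi>l y * D y) + ?I (\<lambda>y. D y * D y)"
      using H10_products_integrable(3)[OF H(1) HD] H10_products_integrable(3)[OF HD HD]
      by (rule interval_lebesgue_integral_add(2))
    finally show ?thesis .
  qed
  ultimately have "energy D D' D D' = (\<mu> - l) * ?I (\<lambda>y. \<Phi>l y * D y) + \<mu> * ?I (\<lambda>y. D y * D y)"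
    using el em by (simp add: algebra_simps)
  then show ?thesis using energy_nonneg[OF HD \<open>D 0 = 0\<close>] by simp
qed

lemma weak_sol_cross_term_bound:
  assumes l: "l < 0" and \<Phi>: "weak_sol U ml l \<Phi> \<Phi>'" "\<Phi> 0 = 1"
    and \<Psi>: "weak_sol U m\<mu> \<mu> \<Psi> \<Psi>'" "\<Psi> 0 = 1" and \<mu>: "\<bar>\<mu> - l\<bar> < - l / 2"
  shows "\<bar>LBINT y=(-1::real)..(1::real). \<Phi> y * (\<Psi> y - \<Phi> y)\<bar>
    \<le> \<bar>\<mu> - l\<bar> * (LBINT y=(-1::real)..(1::real). \<Phi> y * \<Phi> y) / (- l / 2)"
proof -
  have H: "H10 \<Phi> \<Phi>'" "H10 \<Psi> \<Psi>'" using \<Phi>(1) \<Psi>(1) by (simp_all add: weak_sol_def)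
  define D D' where "D x = \<Psi> x - \<Phi> x" and "D' x = \<Psi>' x - \<Phi>' x" for x
  have HD: "H10 D D'" unfolding D_def D'_def by (rule H10_diff[OF H(2,1)])
  let ?I = "\<lambda>f. (LBINT y=(-1::real)..(1::real). f y)"
  define N P X where "N = ?I (\<lambda>y. \<Phi> y * \<Phi> y)" and "P = ?I (\<lambda>y. \<Phi> y * D y)"
    and "X = ?I (\<lambda>y. D y * D y)"
  have "0 \<le> X" unfolding X_def by (rule interval_integral_nonneg_open) auto
  have "- l / 2 * X \<le> - \<mu> * X"
    using \<mu> \<open>0 \<le> X\<close> by (intro mult_right_mono) auto
  also have "\<dots> \<le> (\<mu> - l) * P"
    using weak_sol_difference_estimate[OF \<Phi> \<Psi>] unfolding P_def X_def D_def by simp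
  also have "\<dots> \<le> \<bar>\<mu> - l\<bar> * \<bar>P\<bar>"
    by (metis abs_ge_self abs_mult)
  finally have "- l / 2 * X \<le> \<bar>\<mu> - l\<bar> * \<bar>P\<bar>" .
  moreover have "P\<^sup>2 \<le> N * X"
  proof -
    have "(?I (\<lambda>y. \<Phi> y * D y))\<^sup>2 \<le> ?I (\<lambda>y. \<Phi> y ^ 2) * ?I (\<lambda>y. D y ^ 2)"
      by (rule interval_integral_Cauchy_Schwarz)
         (use H10_products_integrable(3)[OF H(1,1)] H10_products_integrable(3)[OF HD HD]
           H10_products_integrable(3)[OF H(1) HD] in \<open>simp_all add: power2_eq_square\<close>)
    then show ?thesis unfolding P_def N_def X_def by (simp add: power2_eq_square)
  qed
  moreover have "0 \<le> N" using integral_sq_pos[OF H(1) \<Phi>(2)] by (simp add: N_def)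
  ultimately have "\<bar>P\<bar> \<le> \<bar>\<mu> - l\<bar> * N / (- l / 2)"
    using l by (intro abs_le_of_sq_le_mult) auto
  then show ?thesis unfolding P_def N_def D_def .
qed

lemma M_difference_quotient_bound:
  assumes l: "l < 0" and \<Phi>: "weak_sol U (M l) l \<Phi> \<Phi>'" "\<Phi> 0 = 1"
    and \<mu>: "\<mu> \<noteq> l" "\<bar>\<mu> - l\<bar> < - l / 2"
  defines "N \<equiv> (LBINT y=(-1::real)..(1::real). \<Phi> y * \<Phi> y)"
  shows "\<bar>(M \<mu> - M l) / (\<mu> - l) + deriv U 0 * N\<bar> \<le> deriv U 0 * (\<bar>\<mu> - l\<bar> * N / (- l / 2))"
proof -
  have "\<mu> < 0" using \<mu> l by linarith
  obtain \<Psi> \<Psi>' where \<Psi>: "weak_sol U (M \<mu>) \<mu> \<Psi> \<Psi>'" "\<Psi> 0 = 1" using M_spec[OF \<open>\<mu> < 0\<close>] by blast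
  have H: "H10 \<Phi> \<Phi>'" "H10 \<Psi> \<Psi>'" using \<Phi>(1) \<Psi>(1) by (simp_all add: weak_sol_def)
  define P where "P = (LBINT y=(-1::real)..(1::real). \<Phi> y * (\<Psi> y - \<Phi> y))"
  have "(LBINT y=(-1::real)..(1::real). \<Phi> y * \<Psi> y)
      = (LBINT y=(-1::real)..(1::real). \<Phi> y * \<Phi> y + \<Phi> y * (\<Psi> y - \<Phi> y))"
    by (simp add: algebra_simps)
  also have "\<dots> = N + P"
    unfolding N_def P_def
    by (rule interval_lebesgue_integral_add(2)[OF H10_products_integrable(3)[OF H(1,1)]
          H10_products_integrable(3)[OF H(1) H10_diff[OF H(2,1)]]])
  finally have "M l - M \<mu> = deriv U 0 * ((\<mu> - l) * (N + P))"
    using weak_sol_parameter_difference[OF \<Phi> \<Psi>] by simp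
  then have quotient: "(M \<mu> - M l) / (\<mu> - l) + deriv U 0 * N = - deriv U 0 * P"
    using \<mu>(1) by (simp add: field_simps)
  have "deriv U 0 * \<bar>P\<bar> \<le> deriv U 0 * (\<bar>\<mu> - l\<bar> * N / (- l / 2))"
    using weak_sol_cross_term_bound[OF l \<Phi> \<Psi> \<mu>(2)] deriv_U_0_pos
    unfolding P_def N_def by (intro mult_left_mono) auto
  moreover have "\<bar>- deriv U 0 * P\<bar> = deriv U 0 * \<bar>P\<bar>"
    using deriv_U_0_pos by (simp add: abs_mult)
  ultimately show ?thesis unfolding quotient by simp
qed
lemma M_has_negative_derivative:
  assumes l: "l < 0"
  shows "\<exists>d. (M has_real_derivative d) (at l) \<and> d < 0"
proof -
  obtain \<Phi> \<Phi>' where \<Phi>: "weak_sol U (M l) l \<Phi> \<Phi>'" "\<Phi> 0 = 1" using M_spec[OF l] by blast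
  define N where "N = (LBINT y=(-1::real)..(1::real). \<Phi> y * \<Phi> y)"
  have "0 < N"
    unfolding N_def using \<Phi> by (intro integral_sq_pos[of \<Phi> \<Phi>']) (simp_all add: weak_sol_def)
  have "((\<lambda>\<mu>. (M \<mu> - M l) / (\<mu> - l) + deriv U 0 * N) \<longlongrightarrow> 0) (at l)"
  proof (rule Lim_null_comparison)
    show "eventually (\<lambda>\<mu>. norm ((M \<mu> - M l) / (\<mu> - l) + deriv U 0 * N)
        \<le> deriv U 0 * (\<bar>\<mu> - l\<bar> * N / (- l / 2))) (at l)"
      unfolding eventually_at
    proof (intro exI[of _ "- l / 2"] conjI ballI impI)
      fix \<mu> assume "\<mu> \<noteq> l \<and> dist \<mu> l < - l / 2"
      then show "norm ((M \<mu> - M l) / (\<mu> - l) + deriv U 0 * N) \<le> deriv U 0 * (\<bar>\<mu> - l\<bar> * N / (- l / 2))"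
        using M_difference_quotient_bound[OF l \<Phi>, of \<mu>] unfolding N_def dist_real_def by simp
    qed (use l in simp)
    have "((\<lambda>\<mu>. deriv U 0 * (\<bar>\<mu> - l\<bar> * N / (- l / 2))) \<longlongrightarrow> deriv U 0 * (\<bar>l - l\<bar> * N / (- l / 2))) (at l)"
      using l by (intro tendsto_intros) auto
    then show "((\<lambda>\<mu>. deriv U 0 * (\<bar>\<mu> - l\<bar> * N / (- l / 2))) \<longlongrightarrow> 0) (at l)" by simp
  qed
  from tendsto_add[OF this tendsto_const[of "- deriv U 0 * N"]]
  have "((\<lambda>\<mu>. (M \<mu> - M l) / (\<mu> - l)) \<longlongrightarrow> - deriv U 0 * N) (at l)" by simp
  then have "(M has_real_derivative - deriv U 0 * N) (at l)"
    by (simp add: has_field_derivative_iff)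
  moreover have "- deriv U 0 * N < 0" using deriv_U_0_pos \<open>0 < N\<close> by simp
  ultimately show ?thesis by blast
qed

end

theorem lemma2p1:
  fixes U :: "real \<Rightarrow> real" and c\<^sub>0 C :: real
  assumes "Ck_on 4 {-1<..<1} U"
    and "c\<^sub>0 > 0"
    and "\<forall>y\<in>{-1<..<1}. deriv U y > c\<^sub>0"
    and "U 0 = 0"
    and "deriv (deriv U) 0 = 0"
    and "\<forall>y\<in>{-1<..<1}. - C \<le> deriv (deriv U) y / U y \<and> deriv (deriv U) y / U y \<le> 0"
  shows "\<exists>M :: real \<Rightarrow> real.
           (\<forall>m lam. lam < 0 \<longrightarrow> (has_nontrivial_sol U m lam \<longleftrightarrow> m = M lam)) \<and>
           (\<forall>lam<0. \<exists>d. (M has_real_derivative d) (at lam) \<and> d < 0)"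
proof -
  interpret monotone_profile U c\<^sub>0 C
    using assms Ck_on_mono[OF assms(1), of 2] by unfold_locales auto
  show ?thesis
    using has_nontrivial_sol_iff M_has_negative_derivative by blast
qed

end
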